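(* Let $W$ be a graphon satisfying the Regularity Condition. For every $y\in(0,1)$ there exists $C>0$ such that for all $n\ge2$ and $u\in[0,1]$, with $d=D(y)$, $$H_n(y,u)=\frac{d-W(y,u)}{D'(y)}+R_n(u),\qquad |R_n(u)|\le Cn^{-1/4}.$$ Moreover, for all $y\in(0,1)$ and $u\in[0,1]$ with $u\ne y$: $|H_n^\star(y,u)|\le1$ for all $n\ge2$, and $\lim_{n\to\infty}H_n^\star(y,u)=\mathbf 1_{\{u\le y\}}-y$.
   Context: A graphon is a symmetric measurable $W:[0,1]^2\to[0,1]$; $D(x)=\int_0^1W(x,y)dy$. Regularity Condition: $W\in\mathcal{C}^3([0,1]^2)$, $D'>0$, $W\le1-\varepsilon_0$ and $D\ge\varepsilon_0$ for some $\varepsilon_0\in(0,1/2)$. $X=(X_i)$ i.i.d. uniform; $G_n$ is the graph on $[n]$ where, conditionally on $X$, $\{i,j\}$ is an edge independently with probability $W(X_i,X_j)$; $D_i^{(n)}$ is the degree of $i$ in $G_n$ divided by $n-1$. With $d=D(y)$: $c_n(y)=\mathbb P(D_1^{(n+1)}\le d)$, $H_n(y,u)=n\big(\mathbb E[\mathbf 1_{\{D_1^{(n+1)}\le d\}}\mid X_2=u]-c_n(y)\big)$, $H_n^\star(y,u)=\mathbb E[\mathbf 1_{\{D_1^{(n+1)}\le d\}}\mid X_1=u]-c_n(y)$. *)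

theory Defs
  imports "HOL-Probability.Probability"
begin

definition sq01 :: "(real \<times> real) set" where
  "sq01 = {0..1} \<times> {0..1}"

definition graphon :: "(real \<Rightarrow> real \<Rightarrow> real) \<Rightarrow> bool" where
  "graphon W \<longleftrightarrow>
     (\<lambda>(x, y). W x y) \<in> borel_measurable (restrict_space borel sq01) \<and>
     (\<forall>x\<in>{0..1}. \<forall>y\<in>{0..1}. W x y = W y x \<and> 0 \<le> W x y \<and> W x y \<le> 1)"

definition Dfun :: "(real \<Rightarrow> real \<Rightarrow> real) \<Rightarrow> real \<Rightarrow> real" where
  "Dfun W x = integral {0..1} (\<lambda>y. W x y)"

definition C3_on :: "(real \<times> real) set \<Rightarrow> (real \<times> real \<Rightarrow> real) \<Rightarrow> bool" where
  "C3_on S f \<longleftrightarrow>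
    (\<exists>(f1 :: real \<times> real \<Rightarrow> ((real \<times> real) \<Rightarrow>\<^sub>L real))
      (f2 :: real \<times> real \<Rightarrow> ((real \<times> real) \<Rightarrow>\<^sub>L ((real \<times> real) \<Rightarrow>\<^sub>L real)))
      (f3 :: real \<times> real \<Rightarrow> ((real \<times> real) \<Rightarrow>\<^sub>L ((real \<times> real) \<Rightarrow>\<^sub>L ((real \<times> real) \<Rightarrow>\<^sub>L real)))).
       (\<forall>x\<in>S. (f has_derivative blinfun_apply (f1 x)) (at x within S) \<and>
               (f1 has_derivative blinfun_apply (f2 x)) (at x within S) \<and>
               (f2 has_derivative blinfun_apply (f3 x)) (at x within S)) \<and>
       continuous_on S f3)"

definition regular_graphon :: "(real \<Rightarrow> real \<Rightarrow> real) \<Rightarrow> bool" where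
  "regular_graphon W \<longleftrightarrow>
     C3_on sq01 (\<lambda>(x, y). W x y) \<and>
     (\<forall>x\<in>{0..1}. \<exists>d'. (Dfun W has_real_derivative d') (at x within {0..1}) \<and> d' > 0) \<and>
     (\<exists>\<epsilon>0::real. 0 < \<epsilon>0 \<and> \<epsilon>0 < 1/2 \<and>
        (\<forall>x\<in>{0..1}. \<forall>y\<in>{0..1}. W x y \<le> 1 - \<epsilon>0) \<and>
        (\<forall>x\<in>{0..1}. Dfun W x \<ge> \<epsilon>0))"

text \<open>Sampling model for G_m on vertex set {1..m}: latent positions X_i i.i.d. uniform on
  [0,1], and independent uniforms U_{ij} (i<j); {i,j} is an edge iff U_{ij} < W(X_i,X_j).
  Conditionally on X this gives independent edges with probability W(X_i,X_j).\<close>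
definition U01 :: "real measure" where
  "U01 = restrict_space lborel {0..1}"

definition pairs :: "nat \<Rightarrow> (nat \<times> nat) set" where
  "pairs m = {(i, j). 1 \<le> i \<and> i < j \<and> j \<le> m}"

definition model :: "nat \<Rightarrow> ((nat \<Rightarrow> real) \<times> (nat \<times> nat \<Rightarrow> real)) measure" where
  "model m = PiM {1..m} (\<lambda>_. U01) \<Otimes>\<^sub>M PiM (pairs m) (\<lambda>_. U01)"

definition edge :: "(real \<Rightarrow> real \<Rightarrow> real) \<Rightarrow> (nat \<Rightarrow> real) \<Rightarrow> (nat \<times> nat \<Rightarrow> real)
    \<Rightarrow> nat \<Rightarrow> nat \<Rightarrow> bool" where
  "edge W X U i j \<longleftrightarrow> i \<noteq> j \<and> U (min i j, max i j) < W (X i) (X j)"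

definition normdeg :: "(real \<Rightarrow> real \<Rightarrow> real) \<Rightarrow> nat \<Rightarrow> (nat \<Rightarrow> real) \<Rightarrow> (nat \<times> nat \<Rightarrow> real)
    \<Rightarrow> nat \<Rightarrow> real" where
  "normdeg W m X U i = real (card {j \<in> {1..m}. edge W X U i j}) / real (m - 1)"

definition c_n :: "(real \<Rightarrow> real \<Rightarrow> real) \<Rightarrow> nat \<Rightarrow> real \<Rightarrow> real" where
  "c_n W n y = measure (model (n+1))
     {\<omega> \<in> space (model (n+1)). normdeg W (n+1) (fst \<omega>) (snd \<omega>) 1 \<le> Dfun W y}"

text \<open>P(D_1^{(n+1)} \<le> D(y) | X_k = u), the canonical (pinned) version: X_k is set to u
  and all other randomness is integrated out.\<close>
definition cond_prob :: "(real \<Rightarrow> real \<Rightarrow> real) \<Rightarrow> nat \<Rightarrow> nat \<Rightarrow> real \<Rightarrow> real \<Rightarrow> real" where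
  "cond_prob W n k u y = measure (model (n+1))
     {\<omega> \<in> space (model (n+1)). normdeg W (n+1) ((fst \<omega>)(k := u)) (snd \<omega>) 1 \<le> Dfun W y}"

definition H_n :: "(real \<Rightarrow> real \<Rightarrow> real) \<Rightarrow> nat \<Rightarrow> real \<Rightarrow> real \<Rightarrow> real" where
  "H_n W n y u = real n * (cond_prob W n 2 u y - c_n W n y)"

definition H_star :: "(real \<Rightarrow> real \<Rightarrow> real) \<Rightarrow> nat \<Rightarrow> real \<Rightarrow> real \<Rightarrow> real" where
  "H_star W n y u = cond_prob W n 1 u y - c_n W n y"

end

theory Submission
  imports Defs
begin

text \<open>
  Conditionally on the position \<open>s\<close> of vertex 1, its degree in \<open>G\<^sub>n\<^sub>+\<^sub>1\<close> is \<open>Bin(n, D s)\<close>;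
  pinning also \<open>X\<^sub>2 = u\<close> replaces one of these \<open>n\<close> Bernoulli trials by a Bernoulli\<open>(W s u)\<close> one.
  With \<open>k = \<lfloor>n D y\<rfloor>\<close> and \<open>\<Phi>\<^sub>n s = P(Bin(n, D s) \<le> k)\<close> this gives \<open>c\<^sub>n y = \<integral>\<Phi>\<^sub>n\<close> and
  \<open>H\<^sup>\<star>\<^sub>n y u = \<Phi>\<^sub>n u - c\<^sub>n y\<close>; and since swapping one trial moves the distribution function by
  \<open>D s - W s u\<close> times the point mass at \<open>k\<close>, also \<open>H\<^sub>n y u = \<integral> (D s - W s u) / D' s \<cdot> \<rho>\<^sub>n s ds\<close>
  with \<open>\<rho>\<^sub>n = -\<Phi>\<^sub>n'\<close>.

  As \<open>D\<close> increases with slope at least \<open>c > 0\<close>, Hoeffding's inequality makes \<open>\<Phi>\<^sub>n s\<close> exponentially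
  close to 1 for \<open>s \<le> y - n\<^sup>-\<^sup>1\<^sup>/\<^sup>4\<close> and to 0 for \<open>s \<ge> y + n\<^sup>-\<^sup>1\<^sup>/\<^sup>4\<close>. So the density \<open>\<rho>\<^sub>n\<close>
  concentrates in a window of width \<open>n\<^sup>-\<^sup>1\<^sup>/\<^sup>4\<close> around \<open>y\<close>, and integrating the Lipschitz function
  \<open>(D - W(\<cdot>, u)) / D'\<close> against it returns its value at \<open>y\<close> up to \<open>O(n\<^sup>-\<^sup>1\<^sup>/\<^sup>4)\<close>. The pointwise
  limit \<open>\<Phi>\<^sub>n s \<rightarrow> [s < y]\<close> and dominated convergence give \<open>H\<^sup>\<star>\<^sub>n y u \<rightarrow> [u \<le> y] - y\<close>.
\<close>

section \<open>Binomial distribution functions\<close>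

definition binom_cdf :: "nat \<Rightarrow> real \<Rightarrow> nat \<Rightarrow> real" where
  "binom_cdf N p k = (\<Sum>i\<le>k. real (N choose i) * p ^ i * (1 - p) ^ (N - i))"

text \<open>The distribution function at \<open>k\<close> of \<open>Bin(N, p) + Bernoulli(q)\<close>, independent summands.\<close>
definition binom_bernoulli_cdf :: "nat \<Rightarrow> real \<Rightarrow> real \<Rightarrow> nat \<Rightarrow> real" where
  "binom_bernoulli_cdf N p q k =
     q * (if k = 0 then 0 else binom_cdf N p (k - 1)) + (1 - q) * binom_cdf N p k"

lemma binom_cdf_0_right: "binom_cdf N p 0 = (1 - p) ^ N"
  by (simp add: binom_cdf_def)

lemma binom_cdf_Suc_right:
  "binom_cdf N p (Suc k) = binom_cdf N p k + real (N choose Suc k) * p ^ Suc k * (1 - p) ^ (N - Suc k)"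
  by (simp add: binom_cdf_def)

lemma binom_cdf_0_left: "binom_cdf 0 p k = 1"
  by (induction k) (simp_all add: binom_cdf_0_right binom_cdf_Suc_right)

lemma binom_cdf_minus_pred:
  "binom_cdf N p k - (if k = 0 then 0 else binom_cdf N p (k - 1))
     = real (N choose k) * p ^ k * (1 - p) ^ (N - k)"
  by (cases k) (simp_all add: binom_cdf_0_right binom_cdf_Suc_right)

lemma binom_cdf_Suc_left: "binom_cdf (Suc N) p k = binom_bernoulli_cdf N p p k"
proof (induction k)
  case 0
  then show ?case by (simp add: binom_bernoulli_cdf_def binom_cdf_0_right)
next
  case (Suc k)
  \<comment> \<open>Pascal's rule, with the top term vanishing when \<open>N \<le> k\<close>\<close>
  have pascal: "real (Suc N choose Suc k) * p ^ Suc k * (1 - p) ^ (N - k)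
      = p * (real (N choose k) * p ^ k * (1 - p) ^ (N - k))
        + (1 - p) * (real (N choose Suc k) * p ^ Suc k * (1 - p) ^ (N - Suc k))"
  proof (cases "Suc k \<le> N")
    case True
    then have "N - k = Suc (N - Suc k)" by linarith
    then show ?thesis by (simp add: algebra_simps)
  next
    case False
    then show ?thesis by (simp add: binomial_eq_0)
  qed
  have pred: "(if Suc k = 0 then 0 else binom_cdf N p (Suc k - 1))
      = (if k = 0 then 0 else binom_cdf N p (k - 1)) + real (N choose k) * p ^ k * (1 - p) ^ (N - k)"
    using binom_cdf_minus_pred[of N p k] by simp
  show ?case
    using Suc pascal unfolding binom_bernoulli_cdf_def binom_cdf_Suc_right[of "Suc N"] pred
    by (simp add: binom_cdf_Suc_right algebra_simps)
qed

lemma binom_bernoulli_cdf_minus_binom_cdf: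
  "binom_bernoulli_cdf N p q k - binom_cdf (Suc N) p k
     = (p - q) * (real (N choose k) * p ^ k * (1 - p) ^ (N - k))"
  unfolding binom_cdf_Suc_left binom_bernoulli_cdf_def binom_cdf_minus_pred[symmetric]
  by (simp add: algebra_simps)

lemma binom_cdf_eq_prob:
  assumes "0 \<le> p" "p \<le> 1"
  shows "binom_cdf N p k = measure_pmf.prob (binomial_pmf N p) {..k}"
  using assms by (simp add: binom_cdf_def measure_measure_pmf_finite)

lemma binom_cdf_bounds:
  assumes "0 \<le> p" "p \<le> 1"
  shows "0 \<le> binom_cdf N p k" "binom_cdf N p k \<le> 1"
  using assms by (simp_all add: binom_cdf_eq_prob)

lemma binom_bernoulli_cdf_nonneg:
  assumes "0 \<le> p" "p \<le> 1" "0 \<le> q" "q \<le> 1"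
  shows "0 \<le> binom_bernoulli_cdf N p q k"
  using assms binom_cdf_bounds[OF assms(1,2)] by (simp add: binom_bernoulli_cdf_def)

lemma binom_term_has_derivative:
  "((\<lambda>p. real (N choose Suc k) * p ^ Suc k * (1 - p) ^ (N - Suc k)) has_real_derivative
     real N * real ((N - 1) choose k) * p ^ k * (1 - p) ^ (N - 1 - k)
     - real N * real ((N - 1) choose Suc k) * p ^ Suc k * (1 - p) ^ (N - 1 - Suc k)) (at p)"
proof -
  have absorb: "real (N choose Suc k) * real (Suc k) = real N * real ((N - 1) choose k)"
               "real (N choose Suc k) * real (N - Suc k) = real N * real ((N - 1) choose Suc k)"
    by (metis binomial_absorption mult.commute of_nat_mult,
        metis binomial_absorb_comp mult.commute of_nat_mult)
  show ?thesis
    unfolding absorb[symmetric]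
    by (rule derivative_eq_intros refl)+ (simp add: algebra_simps)
qed

lemma binom_cdf_has_derivative:
  "((\<lambda>p. binom_cdf N p k) has_real_derivative
     - (real N * real ((N - 1) choose k) * p ^ k * (1 - p) ^ (N - 1 - k))) (at p)"
proof (induction k)
  case 0
  show ?case
    unfolding binom_cdf_0_right
    by (rule derivative_eq_intros refl)+ (simp add: power_eq_if)
next
  case (Suc k)
  show ?case
    unfolding binom_cdf_Suc_right
    by (rule DERIV_cong[OF DERIV_add[OF Suc.IH binom_term_has_derivative]]) simp
qed

lemma binom_cdf_upper_tail:
  assumes p: "0 \<le> p" "p \<le> 1" and n: "n > 0" and \<epsilon>: "\<epsilon> \<ge> 0"
    and k: "p + \<epsilon> \<le> (real k + 1) / real n"
  shows "1 - binom_cdf n p k \<le> exp (-2 * real n * \<epsilon>\<^sup>2)"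
proof -
  have "1 - binom_cdf n p k = measure_pmf.prob (binomial_pmf n p) (UNIV - {..k})"
    using p measure_pmf.prob_compl[of "{..k}" "binomial_pmf n p"] by (simp add: binom_cdf_eq_prob)
  also have "\<dots> \<le> measure_pmf.prob (binomial_pmf n p) {x. real x / real n \<ge> p + \<epsilon>}"
  proof (rule measure_pmf.finite_measure_mono)
    show "UNIV - {..k} \<subseteq> {x. real x / real n \<ge> p + \<epsilon>}"
      using k n by (auto simp: divide_right_mono elim!: order.trans)
  qed simp
  also have "\<dots> \<le> exp (-2 * real n * \<epsilon>\<^sup>2)"
    using binomial_distribution.prob_ge'[of p n \<epsilon>] p n \<epsilon> by (simp add: binomial_distribution_def)
  finally show ?thesis .
qed

lemma binom_cdf_lower_tail:
  assumes p: "0 \<le> p" "p \<le> 1" and n: "n > 0" and \<epsilon>: "\<epsilon> \<ge> 0"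
    and k: "real k / real n \<le> p - \<epsilon>"
  shows "binom_cdf n p k \<le> exp (-2 * real n * \<epsilon>\<^sup>2)"
proof -
  have "binom_cdf n p k \<le> measure_pmf.prob (binomial_pmf n p) {x. real x / real n \<le> p - \<epsilon>}"
    unfolding binom_cdf_eq_prob[OF p]
  proof (rule measure_pmf.finite_measure_mono)
    show "{..k} \<subseteq> {x. real x / real n \<le> p - \<epsilon>}"
      using k n by (auto simp: divide_right_mono elim!: order.trans[rotated])
  qed simp
  also have "\<dots> \<le> exp (-2 * real n * \<epsilon>\<^sup>2)"
    using binomial_distribution.prob_le'[of p n \<epsilon>] p n \<epsilon> by (simp add: binomial_distribution_def)
  finally show ?thesis .
qed

lemma exp_neg_le_inverse:
  assumes "0 < t"
  shows "exp (- t) \<le> 1 / (t :: real)"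
proof -
  have "t \<le> exp t"
    using exp_ge_add_one_self[of t] by linarith
  then show ?thesis
    using assms by (simp add: exp_minus divide_simps)
qed

lemma exp_neg_linear_tendsto_0:
  assumes "0 < \<epsilon>"
  shows "(\<lambda>n. exp (-2 * real n * \<epsilon>\<^sup>2)) \<longlonglongrightarrow> 0"
proof (rule tendsto_sandwich[OF _ _ tendsto_const lim_const_over_n[of "1 / (2 * \<epsilon>\<^sup>2)"]])
  show "\<forall>\<^sub>F n in sequentially. exp (-2 * real n * \<epsilon>\<^sup>2) \<le> 1 / (2 * \<epsilon>\<^sup>2) / real n"
  proof (rule eventually_sequentiallyI[of 1])
    fix n :: nat assume "1 \<le> n"
    then show "exp (-2 * real n * \<epsilon>\<^sup>2) \<le> 1 / (2 * \<epsilon>\<^sup>2) / real n"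
      using exp_neg_le_inverse[of "2 * real n * \<epsilon>\<^sup>2"] assms by (simp add: ac_simps)
  qed
qed simp

lemma lipschitz_on_integral_param:
  fixes g :: "real \<Rightarrow> real \<Rightarrow> real"
  assumes g: "\<And>t. t \<in> {0..1} \<Longrightarrow> M-lipschitz_on {0..1} (\<lambda>x. g x t)"
    and integrable: "\<And>x. x \<in> {0..1} \<Longrightarrow> g x integrable_on {0..1}"
    and M: "0 \<le> M"
  shows "M-lipschitz_on {0..1} (\<lambda>x. integral {0..1} (g x))"
proof (rule lipschitz_onI[OF _ M])
  fix x x' :: real assume x: "x \<in> {0..1}" and x': "x' \<in> {0..1}"
  have "integral {0..1} (g x) - integral {0..1} (g x') = integral {0..1} (\<lambda>t. g x t - g x' t)"
    by (rule integral_diff[OF integrable[OF x] integrable[OF x'], symmetric])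
  also have "norm \<dots> \<le> integral {0..1} (\<lambda>t::real. M * dist x x')"
    by (rule Henstock_Kurzweil_Integration.integral_norm_bound_integral)
       (use integrable x x' lipschitz_onD[OF g] in \<open>auto intro!: integrable_diff simp: dist_real_def\<close>)
  finally show "dist (integral {0..1} (g x)) (integral {0..1} (g x')) \<le> M * dist x x'"
    by (simp add: dist_real_def)
qed

lemma continuous_on_pos_bounded_below:
  fixes g :: "real \<Rightarrow> real"
  assumes "continuous_on {0..1} g" "\<And>x. x \<in> {0..1} \<Longrightarrow> 0 < g x"
  obtains c where "0 < c" "\<And>x. x \<in> {0..1} \<Longrightarrow> c \<le> g x"
proof -
  obtain x0 where "x0 \<in> {0..1}" "\<And>x. x \<in> {0..1} \<Longrightarrow> g x0 \<le> g x"
    using continuous_attains_inf[OF compact_Icc _ assms(1)] by auto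
  then show ?thesis
    using that assms(2) by blast
qed

lemma exp_neg_quarter_power_le:
  fixes c n :: real
  assumes "0 < c" "1 \<le> n"
  shows "exp (-2 * n * (c * n powr (-1/4))\<^sup>2) \<le> n powr (-1/4) / (2 * c\<^sup>2)"
proof -
  have "(n powr (-1/4))\<^sup>2 = n powr (-1/2)"
    by (simp add: power2_eq_square flip: powr_add)
  then have "n * (n powr (-1/4))\<^sup>2 = n powr (1/2)"
    using assms by (simp add: powr_mult_base)
  then have "exp (-2 * n * (c * n powr (-1/4))\<^sup>2) = exp (- (2 * c\<^sup>2 * n powr (1/2)))"
    by (simp add: power_mult_distrib algebra_simps)
  also have "\<dots> \<le> 1 / (2 * c\<^sup>2 * n powr (1/2))"
    using assms by (intro exp_neg_le_inverse) simp
  also have "\<dots> = n powr (-1/2) / (2 * c\<^sup>2)"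
    using assms by (simp add: powr_minus_divide)
  also have "\<dots> \<le> n powr (-1/4) / (2 * c\<^sup>2)"
    using assms by (intro divide_right_mono powr_mono) auto
  finally show ?thesis .
qed

lemma has_integral_neg_derivative:
  assumes \<Phi>: "\<And>s. s \<in> {0..1} \<Longrightarrow> (\<Phi> has_real_derivative - \<rho> s) (at s within {0..1})"
    and pq: "0 \<le> p" "p \<le> q" "q \<le> 1"
  shows "(\<rho> has_integral (\<Phi> p - \<Phi> q)) {p..q}"
proof -
  have "((\<lambda>s. - \<rho> s) has_integral (\<Phi> q - \<Phi> p)) {p..q}"
  proof (rule fundamental_theorem_of_calculus[OF pq(2)])
    fix s assume s: "s \<in> {p..q}"
    have "(\<Phi> has_real_derivative - \<rho> s) (at s within {p..q})"
      by (rule DERIV_subset[OF \<Phi>]) (use s pq in auto)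
    then show "(\<Phi> has_vector_derivative - \<rho> s) (at s within {p..q})"
      by (simp add: has_real_derivative_iff_has_vector_derivative)
  qed
  from has_integral_neg[OF this] show ?thesis
    by simp
qed

lemma integral_weighted_le_mass:
  assumes \<Phi>: "\<And>s. s \<in> {0..1} \<Longrightarrow> (\<Phi> has_real_derivative - \<rho> s) (at s within {0..1})"
    and \<rho>: "continuous_on {0..1} \<rho>" "\<And>s. s \<in> {0..1} \<Longrightarrow> 0 \<le> \<rho> s"
    and f: "continuous_on {0..1} f" "\<And>s. s \<in> {p..q} \<Longrightarrow> \<bar>f s\<bar> \<le> K"
    and pq: "0 \<le> p" "p \<le> q" "q \<le> 1"
  shows "\<bar>integral {p..q} (\<lambda>s. f s * \<rho> s)\<bar> \<le> K * (\<Phi> p - \<Phi> q)"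
proof -
  have sub: "{p..q} \<subseteq> {0..1}" using pq by auto
  have "norm (integral {p..q} (\<lambda>s. f s * \<rho> s)) \<le> integral {p..q} (\<lambda>s. K * \<rho> s)"
  proof (rule integral_norm_bound_integral)
    show "(\<lambda>s. f s * \<rho> s) integrable_on {p..q}" "(\<lambda>s. K * \<rho> s) integrable_on {p..q}"
      using sub by (auto intro!: integrable_continuous_interval continuous_intros
          intro: continuous_on_subset[OF f(1)] continuous_on_subset[OF \<rho>(1)])
    show "norm (f s * \<rho> s) \<le> K * \<rho> s" if "s \<in> {p..q}" for s
      using f(2)[OF that] \<rho>(2)[of s] that sub by (auto simp: abs_mult intro!: mult_right_mono)
  qed
  also have "\<dots> = K * (\<Phi> p - \<Phi> q)"
    using integral_unique[OF has_integral_neg_derivative[OF \<Phi> pq]] by simp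
  finally show ?thesis
    by simp
qed

lemma decreasing_of_neg_derivative:
  assumes \<Phi>: "\<And>s. s \<in> {0..1} \<Longrightarrow> (\<Phi> has_real_derivative - \<rho> s) (at s within {0..1})"
    and \<rho>: "\<And>s. s \<in> {0..1} \<Longrightarrow> 0 \<le> \<rho> s"
    and pq: "0 \<le> p" "p \<le> q" "q \<le> 1"
  shows "\<Phi> q \<le> \<Phi> p"
  using has_integral_nonneg[OF has_integral_neg_derivative[OF \<Phi> pq]] \<rho> pq by force

lemma integral_weighted_three_pieces:
  assumes \<Phi>: "\<And>s. s \<in> {0..1} \<Longrightarrow> (\<Phi> has_real_derivative - \<rho> s) (at s within {0..1})"
    and \<Phi>01: "\<And>s. s \<in> {0..1} \<Longrightarrow> 0 \<le> \<Phi> s \<and> \<Phi> s \<le> 1"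
    and \<rho>: "continuous_on {0..1} \<rho>" "\<And>s. s \<in> {0..1} \<Longrightarrow> 0 \<le> \<rho> s"
    and f: "continuous_on {0..1} f" "\<And>s. s \<in> {0..1} \<Longrightarrow> \<bar>f s\<bar> \<le> K"
      "\<And>s. s \<in> {a..b} \<Longrightarrow> \<bar>f s\<bar> \<le> E" "0 \<le> E"
    and ab: "0 \<le> a" "a \<le> b" "b \<le> 1"
  shows "\<bar>integral {0..1} (\<lambda>s. f s * \<rho> s)\<bar> \<le> K * (1 - \<Phi> a) + E + K * \<Phi> b"
proof -
  have K: "0 \<le> K" using f(2)[of 0] by simp
  have integrable: "(\<lambda>s. f s * \<rho> s) integrable_on {p..q}" if "0 \<le> p" "q \<le> 1" for p q
    using that by (auto intro!: integrable_continuous_interval continuous_intros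
        intro: continuous_on_subset[OF f(1)] continuous_on_subset[OF \<rho>(1)])
  have "integral {0..1} (\<lambda>s. f s * \<rho> s) = integral {0..a} (\<lambda>s. f s * \<rho> s)
      + integral {a..b} (\<lambda>s. f s * \<rho> s) + integral {b..1} (\<lambda>s. f s * \<rho> s)"
    using Henstock_Kurzweil_Integration.integral_combine[OF _ _ integrable[of 0 1], of a]
      Henstock_Kurzweil_Integration.integral_combine[OF _ _ integrable[of a 1], of b] ab
    by simp
  moreover have "\<bar>integral {0..a} (\<lambda>s. f s * \<rho> s)\<bar> \<le> K * (1 - \<Phi> a)"
    using integral_weighted_le_mass[OF \<Phi> \<rho> f(1), of 0 a K] f(2) ab \<Phi>01[of 0] K
    by (force intro: order.trans mult_left_mono)
  moreover have "\<bar>integral {a..b} (\<lambda>s. f s * \<rho> s)\<bar> \<le> E"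
  proof -
    have "\<bar>integral {a..b} (\<lambda>s. f s * \<rho> s)\<bar> \<le> E * (\<Phi> a - \<Phi> b)"
      using ab f(3) by (intro integral_weighted_le_mass[OF \<Phi> \<rho> f(1)]) auto
    also have "\<dots> \<le> E"
      using \<Phi>01[of a] \<Phi>01[of b] decreasing_of_neg_derivative[OF \<Phi> \<rho>(2), of a b] ab f(4)
      by (intro mult_right_le_one_le) auto
    finally show ?thesis .
  qed
  moreover have "\<bar>integral {b..1} (\<lambda>s. f s * \<rho> s)\<bar> \<le> K * \<Phi> b"
    using integral_weighted_le_mass[OF \<Phi> \<rho> f(1), of b 1 K] f(2) ab \<Phi>01[of 1] K
    by (force intro: order.trans mult_left_mono)
  ultimately show ?thesis
    by linarith
qed

lemma integral_against_concentrated_density: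
  assumes \<Phi>: "\<And>s. s \<in> {0..1} \<Longrightarrow> (\<Phi> has_real_derivative - \<rho> s) (at s within {0..1})"
    and \<Phi>01: "\<And>s. s \<in> {0..1} \<Longrightarrow> 0 \<le> \<Phi> s \<and> \<Phi> s \<le> 1"
    and \<rho>: "continuous_on {0..1} \<rho>" "\<And>s. s \<in> {0..1} \<Longrightarrow> 0 \<le> \<rho> s"
    and g: "continuous_on {0..1} g" "\<And>s. s \<in> {0..1} \<Longrightarrow> \<bar>g s\<bar> \<le> G"
      "\<And>s. s \<in> {0..1} \<Longrightarrow> \<bar>g s - g y\<bar> \<le> L * \<bar>s - y\<bar>" "0 \<le> L"
    and ab: "0 \<le> a" "a \<le> y" "y \<le> b" "b \<le> 1" "y - a \<le> \<delta>" "b - y \<le> \<delta>"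
  shows "\<bar>integral {0..1} (\<lambda>s. g s * \<rho> s) - g y\<bar> \<le> L * \<delta> + 3 * G * ((1 - \<Phi> a) + \<Phi> b)"
proof -
  have y: "y \<in> {0..1}" using ab by auto
  define f where "f s = g s - g y" for s
  have near: "\<bar>f s\<bar> \<le> L * \<delta>" if "s \<in> {a..b}" for s
  proof -
    have "L * \<bar>s - y\<bar> \<le> L * \<delta>"
      using that ab g(4) by (intro mult_left_mono) auto
    then show ?thesis
      using g(3)[of s] that ab by (simp add: f_def)
  qed
  have "\<bar>integral {0..1} (\<lambda>s. f s * \<rho> s)\<bar> \<le> 2 * G * (1 - \<Phi> a) + L * \<delta> + 2 * G * \<Phi> b"
  proof (rule integral_weighted_three_pieces[OF \<Phi> \<Phi>01 \<rho> _ _ near])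
    show "continuous_on {0..1} f"
      unfolding f_def by (intro continuous_intros g(1))
    show "\<bar>f s\<bar> \<le> 2 * G" if "s \<in> {0..1}" for s
      using g(2)[OF that] g(2)[OF y] by (simp add: f_def)
  qed (use ab g(4) in auto)
  moreover have "integral {0..1} (\<lambda>s. g s * \<rho> s) = integral {0..1} (\<lambda>s. f s * \<rho> s) + g y * (\<Phi> 0 - \<Phi> 1)"
  proof -
    have "(\<lambda>s. f s * \<rho> s) integrable_on {0..1}"
      unfolding f_def by (intro integrable_continuous_interval continuous_intros g(1) \<rho>(1))
    moreover have "(\<rho> has_integral (\<Phi> 0 - \<Phi> 1)) {0..1}"
      by (rule has_integral_neg_derivative[OF \<Phi>]) simp_all
    ultimately have "((\<lambda>s. f s * \<rho> s + g y * \<rho> s) has_integral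
        integral {0..1} (\<lambda>s. f s * \<rho> s) + g y * (\<Phi> 0 - \<Phi> 1)) {0..1}"
      by (intro has_integral_add has_integral_mult_right integrable_integral)
    then show ?thesis
      by (intro integral_unique) (simp add: f_def algebra_simps)
  qed
  moreover have "\<bar>g y * (1 - \<Phi> 0 + \<Phi> 1)\<bar> \<le> G * ((1 - \<Phi> a) + \<Phi> b)"
    using decreasing_of_neg_derivative[OF \<Phi> \<rho>(2), of 0 a] decreasing_of_neg_derivative[OF \<Phi> \<rho>(2), of b 1]
      \<Phi>01[of 0] \<Phi>01[of 1] ab g(2)[OF y]
    by (auto simp: abs_mult intro!: mult_mono)
  ultimately show ?thesis
    by (simp add: abs_le_iff algebra_simps)
qed

lemma C3_on_sq01_lipschitz_derivative:
  assumes "C3_on sq01 f"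
  obtains f1 M1 M2 where "\<And>z. z \<in> sq01 \<Longrightarrow> (f has_derivative blinfun_apply (f1 z)) (at z within sq01)"
    "\<And>z. z \<in> sq01 \<Longrightarrow> norm (f1 z) \<le> M1" "M2-lipschitz_on sq01 f1"
proof -
  obtain f1 f2 f3 where
    d1: "\<And>z. z \<in> sq01 \<Longrightarrow> (f has_derivative blinfun_apply (f1 z)) (at z within sq01)" and
    d2: "\<And>z. z \<in> sq01 \<Longrightarrow> (f1 has_derivative blinfun_apply (f2 z)) (at z within sq01)" and
    d3: "\<And>z. z \<in> sq01 \<Longrightarrow> (f2 has_derivative blinfun_apply (f3 z)) (at z within sq01)"
    using assms unfolding C3_on_def by blast
  have sq01: "compact sq01" "convex sq01"
    unfolding sq01_def by (auto intro!: compact_Times convex_Times)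
  obtain M1 where M1: "\<And>z. z \<in> sq01 \<Longrightarrow> norm (f1 z) \<le> M1"
    using compact_imp_bounded[OF compact_continuous_image[OF has_derivative_continuous_on[OF d2] sq01(1)]]
    by (auto simp: bounded_iff)
  obtain M2 where M2: "\<And>z. z \<in> sq01 \<Longrightarrow> norm (f2 z) \<le> M2" "0 \<le> M2"
    using compact_imp_bounded[OF compact_continuous_image[OF has_derivative_continuous_on[OF d3] sq01(1)]]
    by (auto simp: bounded_iff intro: order.trans[OF norm_ge_zero])
  have "M2-lipschitz_on sq01 f1"
  proof (rule lipschitz_onI[OF _ M2(2)])
    fix z z' assume "z \<in> sq01" "z' \<in> sq01"
    then show "dist (f1 z) (f1 z') \<le> M2 * dist z z'"
      using differentiable_bound[OF sq01(2) d2, of M2 z z'] M2(1)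
      by (simp add: dist_norm norm_blinfun.rep_eq[symmetric])
  qed
  with d1 M1 show ?thesis
    using that by blast
qed

lemma continuous_on_sq01_slices:
  assumes g: "continuous_on sq01 g" and x: "x \<in> {0..1}"
  shows "continuous_on {0..1} (\<lambda>t. g (t, x))" "continuous_on {0..1} (\<lambda>t. g (x, t))"
proof -
  have "(\<lambda>t. (t, x)) ` {0..1} \<subseteq> sq01" "(\<lambda>t. (x, t)) ` {0..1} \<subseteq> sq01"
    using x by (auto simp: sq01_def)
  then show "continuous_on {0..1} (\<lambda>t. g (t, x))" "continuous_on {0..1} (\<lambda>t. g (x, t))"
    using continuous_on_compose2[OF g, of "{0..1}" "\<lambda>t. (t, x)"]
      continuous_on_compose2[OF g, of "{0..1}" "\<lambda>t. (x, t)"]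
    by (simp_all add: continuous_on_Pair)
qed

lemma has_real_derivative_first_arg:
  assumes f: "\<And>z. z \<in> sq01 \<Longrightarrow> (f has_derivative blinfun_apply (F z)) (at z within sq01)"
    and st: "s \<in> {0..1}" "t \<in> {0..1}"
  shows "((\<lambda>s. f (s, t)) has_real_derivative blinfun_apply (F (s, t)) (1, 0)) (at s within {0..1})"
proof -
  have pair: "((\<lambda>s. (s, t)) has_derivative (\<lambda>h. (h, 0))) (at s within {0..1})"
    by (intro has_derivative_Pair has_derivative_ident has_derivative_const)
  have image: "(\<lambda>s. (s, t)) ` {0..1} \<subseteq> sq01"
    using st by (auto simp: sq01_def)
  have derivative: "((\<lambda>s. f (s, t)) has_derivative (\<lambda>h. blinfun_apply (F (s, t)) (h, 0))) (at s within {0..1})"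
    by (rule has_derivative_in_compose2[OF f image st(1) pair])
  define a where "a = blinfun_apply (F (s, t)) (1, 0)"
  have "blinfun_apply (F (s, t)) (h, 0) = a * h" for h
  proof -
    have "blinfun_apply (F (s, t)) (h, 0) = blinfun_apply (F (s, t)) (h *\<^sub>R (1, 0))"
      by simp
    also have "\<dots> = h * a"
      by (simp only: blinfun.scaleR_right a_def) simp
    finally show ?thesis
      by simp
  qed
  then have "(\<lambda>h. blinfun_apply (F (s, t)) (h, 0)) = (*) a"
    by (intro ext)
  with derivative show ?thesis
    by (simp add: has_field_derivative_def a_def)
qed

lemma lipschitz_on_first_arg:
  assumes f: "\<And>z. z \<in> sq01 \<Longrightarrow> (f has_derivative blinfun_apply (F z)) (at z within sq01)"
    and F: "\<And>z. z \<in> sq01 \<Longrightarrow> norm (F z) \<le> M" and u: "u \<in> {0..1}"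
  shows "M-lipschitz_on {0..1} (\<lambda>x. f (x, u))"
proof (rule lipschitz_onI)
  show "0 \<le> M"
    using F[of "(0, 0)"] norm_ge_zero[of "F (0, 0)"] by (simp add: sq01_def del: norm_ge_zero)
  fix x x' :: real assume "x \<in> {0..1}" "x' \<in> {0..1}"
  then have "norm (f (x, u) - f (x', u)) \<le> M * norm ((x, u) - (x', u))"
    using u F by (intro differentiable_bound[OF _ f])
       (auto simp: sq01_def convex_Times norm_blinfun.rep_eq[symmetric])
  then show "dist (f (x, u)) (f (x', u)) \<le> M * dist x x'"
    by (simp add: dist_norm)
qed

lemma lipschitz_on_partial_first:
  fixes F :: "real \<times> real \<Rightarrow> (real \<times> real) \<Rightarrow>\<^sub>L real"
  assumes F: "M-lipschitz_on sq01 F" and t: "t \<in> {0..1}"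
  shows "M-lipschitz_on {0..1} (\<lambda>x. blinfun_apply (F (x, t)) (1, 0))"
proof (rule lipschitz_onI[OF _ lipschitz_on_nonneg[OF F]])
  fix x x' :: real assume "x \<in> {0..1}" "x' \<in> {0..1}"
  then have "norm (F (x, t) - F (x', t)) \<le> M * dist x x'"
    using lipschitz_onD[OF F, of "(x, t)" "(x', t)"] t by (simp add: sq01_def dist_Pair_Pair dist_norm)
  moreover have "norm (blinfun_apply (F (x, t) - F (x', t)) (1, 0))
      \<le> norm (F (x, t) - F (x', t)) * norm ((1::real), (0::real))"
    by (rule norm_blinfun)
  ultimately show "dist (blinfun_apply (F (x, t)) (1, 0)) (blinfun_apply (F (x', t)) (1, 0)) \<le> M * dist x x'"
    by (simp add: dist_norm blinfun.diff_left)
qed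

lemma integral_has_derivative_first_arg:
  assumes f: "\<And>z. z \<in> sq01 \<Longrightarrow> (f has_derivative blinfun_apply (F z)) (at z within sq01)"
    and F: "continuous_on sq01 F" and x: "x \<in> {0..1}"
  shows "((\<lambda>x. integral {0..1} (\<lambda>t. f (x, t))) has_real_derivative
      integral {0..1} (\<lambda>t. blinfun_apply (F (x, t)) (1, 0))) (at x within {0..1})"
proof -
  note f_cont = continuous_on_sq01_slices(2)[OF has_derivative_continuous_on[OF f]]
  have "continuous_on ({0..1} \<times> {0..1}) (\<lambda>(x, t). blinfun_apply (F (x, t)) (1, 0))"
    using F unfolding sq01_def case_prod_beta by (intro continuous_intros) auto
  then have "((\<lambda>x. integral (cbox 0 1) (\<lambda>t. f (x, t))) has_real_derivative
      integral (cbox 0 1) (\<lambda>t. blinfun_apply (F (x, t)) (1, 0))) (at x within {0..1})"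
    using x has_real_derivative_first_arg[OF f] integrable_continuous_interval[OF f_cont]
    by (intro leibniz_rule_field_derivative) (auto simp: cbox_interval)
  then show ?thesis
    by (simp add: cbox_interval)
qed

section \<open>Product measures\<close>

lemma emeasure_Collect_eq_nn_integral:
  assumes "{\<omega> \<in> space M. P \<omega>} \<in> sets M"
  shows "emeasure M {\<omega> \<in> space M. P \<omega>} = (\<integral>\<^sup>+\<omega>. (if P \<omega> then 1 else 0) \<partial>M)"
  by (subst nn_integral_indicator[OF assms, symmetric]) (auto intro!: nn_integral_cong simp: indicator_def)

lemma measurable_fun_upd_PiM:
  assumes "i \<in> I" "s \<in> space (M i)"
  shows "(\<lambda>X. X(i := s)) \<in> measurable (PiM I M) (PiM I M)"
  using measurable_fun_upd[of I I i "\<lambda>X. X" "PiM I M" M "\<lambda>_. s"] assms by (simp add: insert_absorb)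

lemma nn_integral_PiM_pin:
  fixes M :: "'i \<Rightarrow> 'a measure"
  assumes M: "\<And>j. prob_space (M j)" and I: "finite I" "i \<in> I"
    and h[measurable]: "h \<in> borel_measurable (PiM I M)"
  shows "(\<integral>\<^sup>+X. h X \<partial>PiM I M) = (\<integral>\<^sup>+s. (\<integral>\<^sup>+X. h (X(i := s)) \<partial>PiM I M) \<partial>M i)"
proof -
  interpret product_prob_space M
    using M by (simp add: product_prob_space_def product_prob_space_axioms_def
        product_sigma_finite_def prob_space_imp_sigma_finite)
  define I' where "I' = I - {i}"
  have I': "I = insert i I'" "i \<notin> I'" "finite I'" using I by (auto simp: I'_def)
  have "(\<integral>\<^sup>+X. h X \<partial>PiM I M) = (\<integral>\<^sup>+s. (\<integral>\<^sup>+X. h (X(i := s)) \<partial>PiM I' M) \<partial>M i)"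
    using h unfolding I'(1) by (intro product_nn_integral_insert_rev) (use I' in auto)
  also have "\<dots> = (\<integral>\<^sup>+s. (\<integral>\<^sup>+X. h (X(i := s)) \<partial>PiM I M) \<partial>M i)"
  proof (rule nn_integral_cong)
    fix s assume s: "s \<in> space (M i)"
    have "(\<lambda>X. h (X(i := s))) \<in> borel_measurable (PiM I M)"
      using measurable_compose[OF measurable_fun_upd_PiM[of i I s M, OF I(2) s] h] .
    then have "(\<integral>\<^sup>+X. h (X(i := s)) \<partial>PiM I M)
        = (\<integral>\<^sup>+X. (\<integral>\<^sup>+t. h ((X(i := t))(i := s)) \<partial>M i) \<partial>PiM I' M)"
      unfolding I'(1) by (intro product_nn_integral_insert) (use I' in auto)
    then show "(\<integral>\<^sup>+X. h (X(i := s)) \<partial>PiM I' M) = (\<integral>\<^sup>+X. h (X(i := s)) \<partial>PiM I M)"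
      by (simp add: prob_space.emeasure_space_1[OF M])
  qed
  finally show ?thesis .
qed

lemma nn_integral_PiM_factor_coordinate:
  fixes M :: "'i \<Rightarrow> 'a measure"
  assumes M: "\<And>j. prob_space (M j)" and I: "finite I" "i \<in> I"
    and f[measurable]: "f \<in> borel_measurable (M i)"
    and g[measurable]: "g \<in> borel_measurable (PiM I M)"
    and g_indep: "\<And>X s. g (X(i := s)) = g X"
  shows "(\<integral>\<^sup>+X. f (X i) * g X \<partial>PiM I M) = (\<integral>\<^sup>+s. f s \<partial>M i) * (\<integral>\<^sup>+X. g X \<partial>PiM I M)"
proof -
  have "(\<integral>\<^sup>+X. f (X i) * g X \<partial>PiM I M) = (\<integral>\<^sup>+s. (\<integral>\<^sup>+X. f s * g X \<partial>PiM I M) \<partial>M i)"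
    using I by (subst nn_integral_PiM_pin[OF M I]) (simp_all add: g_indep)
  also have "\<dots> = (\<integral>\<^sup>+s. f s * (\<integral>\<^sup>+X. g X \<partial>PiM I M) \<partial>M i)"
    by (simp add: nn_integral_cmult)
  also have "\<dots> = (\<integral>\<^sup>+s. f s \<partial>M i) * (\<integral>\<^sup>+X. g X \<partial>PiM I M)"
    by (simp add: nn_integral_multc)
  finally show ?thesis .
qed

lemma nn_integral_pair_PiM_factor_coordinates:
  fixes M :: "'i \<Rightarrow> 'a measure" and N :: "'j \<Rightarrow> 'b measure" and f :: "'a \<Rightarrow> 'b \<Rightarrow> ennreal"
  assumes M: "\<And>i. prob_space (M i)" and N: "\<And>j. prob_space (N j)"
    and I: "finite I" "a \<in> I" and K: "finite K" "b \<in> K"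
    and f[measurable]: "case_prod f \<in> borel_measurable (M a \<Otimes>\<^sub>M N b)"
    and G[measurable]: "G \<in> borel_measurable (PiM I M \<Otimes>\<^sub>M PiM K N)"
    and G_indep: "\<And>X U s. G (X(a := s), U) = G (X, U)" "\<And>X U t. G (X, U(b := t)) = G (X, U)"
  shows "(\<integral>\<^sup>+\<omega>. f (fst \<omega> a) (snd \<omega> b) * G \<omega> \<partial>(PiM I M \<Otimes>\<^sub>M PiM K N)) =
         (\<integral>\<^sup>+z. f (fst z) (snd z) \<partial>(M a \<Otimes>\<^sub>M N b)) * (\<integral>\<^sup>+\<omega>. G \<omega> \<partial>(PiM I M \<Otimes>\<^sub>M PiM K N))"
proof -
  interpret PK: prob_space "PiM K N" by (intro prob_space_PiM N)
  interpret Nb: prob_space "N b" by (rule N)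
  define \<phi> where "\<phi> s = (\<integral>\<^sup>+t. f s t \<partial>N b)" for s
  define \<Gamma> where "\<Gamma> X = (\<integral>\<^sup>+U. G (X, U) \<partial>PiM K N)" for X
  have [measurable]: "\<phi> \<in> borel_measurable (M a)" "\<Gamma> \<in> borel_measurable (PiM I M)"
    unfolding \<phi>_def \<Gamma>_def by measurable
  have "(\<integral>\<^sup>+\<omega>. f (fst \<omega> a) (snd \<omega> b) * G \<omega> \<partial>(PiM I M \<Otimes>\<^sub>M PiM K N)) =
      (\<integral>\<^sup>+X. (\<integral>\<^sup>+U. f (X a) (U b) * G (X, U) \<partial>PiM K N) \<partial>PiM I M)"
    using I K by (subst PK.nn_integral_fst[symmetric]) simp_all
  also have "\<dots> = (\<integral>\<^sup>+X. \<phi> (X a) * \<Gamma> X \<partial>PiM I M)"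
  proof (rule nn_integral_cong)
    fix X assume X: "X \<in> space (PiM I M)"
    then have "X a \<in> space (M a)" using I by (auto simp: space_PiM)
    then show "(\<integral>\<^sup>+U. f (X a) (U b) * G (X, U) \<partial>PiM K N) = \<phi> (X a) * \<Gamma> X"
      unfolding \<phi>_def \<Gamma>_def using X
      by (intro nn_integral_PiM_factor_coordinate[OF N K]) (simp_all add: G_indep)
  qed
  also have "\<dots> = (\<integral>\<^sup>+s. \<phi> s \<partial>M a) * (\<integral>\<^sup>+X. \<Gamma> X \<partial>PiM I M)"
    by (rule nn_integral_PiM_factor_coordinate[OF M I]) (simp_all add: \<Gamma>_def G_indep)
  also have "(\<integral>\<^sup>+s. \<phi> s \<partial>M a) = (\<integral>\<^sup>+z. f (fst z) (snd z) \<partial>(M a \<Otimes>\<^sub>M N b))"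
    unfolding \<phi>_def using Nb.nn_integral_fst[of "\<lambda>z. f (fst z) (snd z)"] by simp
  also have "(\<integral>\<^sup>+X. \<Gamma> X \<partial>PiM I M) = (\<integral>\<^sup>+\<omega>. G \<omega> \<partial>(PiM I M \<Otimes>\<^sub>M PiM K N))"
    unfolding \<Gamma>_def by (rule PK.nn_integral_fst) simp
  finally show ?thesis .
qed

section \<open>The sampling model\<close>

lemma prob_space_U01: "prob_space U01"
  unfolding U01_def by (rule prob_space_restrict_space) auto

lemma space_U01: "space U01 = {0..1}"
  by (simp add: U01_def space_restrict_space)

lemma measurable_ident_U01[measurable]: "(\<lambda>x. x) \<in> borel_measurable U01"
  unfolding U01_def by (rule measurable_restrict_space1) simp

lemma nn_integral_U01_continuous:
  assumes g: "continuous_on {0..1} g" and nonneg: "\<And>s. s \<in> {0..1} \<Longrightarrow> 0 \<le> g s"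
  shows "(\<integral>\<^sup>+s. ennreal (g s) \<partial>U01) = ennreal (integral {0..1} g)"
proof -
  have "(\<integral>\<^sup>+s. ennreal (g s) \<partial>U01) = (\<integral>\<^sup>+s. ennreal (g s) * indicator {0..1} s \<partial>lborel)"
    unfolding U01_def by (rule nn_integral_restrict_space) simp
  also have "\<dots> = ennreal (integral {0..1} g)"
    using integrable_continuous_interval[OF g] nonneg
    by (intro nn_integral_has_integral_lebesgue') (simp_all add: has_integral_integral)
  finally show ?thesis .
qed

lemma nn_integral_U01_below:
  assumes "0 \<le> c" "c \<le> 1"
  shows "(\<integral>\<^sup>+t. (if t < c then 1 else 0) \<partial>U01) = ennreal c"
proof -
  have "(\<integral>\<^sup>+t. (if t < c then 1 else 0) \<partial>U01) = emeasure U01 ({..<c} \<inter> space U01)"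
    by (subst nn_integral_indicator'[symmetric])
       (auto intro!: nn_integral_cong simp: indicator_def U01_def sets_restrict_space_iff)
  also have "{..<c} \<inter> space U01 = {0..<c}"
    using assms by (auto simp: space_U01)
  also have "emeasure U01 {0..<c} = emeasure lborel {0..<c}"
    unfolding U01_def using assms by (subst emeasure_restrict_space) auto
  finally show ?thesis
    using assms by simp
qed

lemma finite_pairs: "finite (pairs m)"
  by (rule finite_subset[of _ "{1..m} \<times> {1..m}"]) (auto simp: pairs_def)

lemma prob_space_model: "prob_space (model m)"
  unfolding model_def by (intro prob_space_pair prob_space_PiM prob_space_U01)

lemma measurable_model_X[measurable]: "j \<in> {1..m} \<Longrightarrow> (\<lambda>\<omega>. fst \<omega> j) \<in> measurable (model m) U01"
  unfolding model_def by measurable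

lemma measurable_model_U[measurable]: "p \<in> pairs m \<Longrightarrow> (\<lambda>\<omega>. snd \<omega> p) \<in> measurable (model m) U01"
  unfolding model_def by measurable

lemma measurable_model_pin:
  assumes "i \<in> {1..m}" "s \<in> {0..1}"
  shows "(\<lambda>\<omega>. ((fst \<omega>)(i := s), snd \<omega>)) \<in> measurable (model m) (model m)"
proof -
  have upd: "(\<lambda>X. X(i := s)) \<in> measurable (PiM {1..m} (\<lambda>_. U01)) (PiM {1..m} (\<lambda>_. U01))"
    using measurable_fun_upd_PiM[of i "{1..m}" s "\<lambda>_. U01"] assms by (simp add: space_U01)
  show ?thesis
    unfolding model_def by (intro measurable_Pair measurable_compose[OF measurable_fst upd] measurable_snd)
qed

lemma nn_integral_model_pin:
  assumes f[measurable]: "f \<in> borel_measurable (model m)" and i: "i \<in> {1..m}"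
  shows "(\<integral>\<^sup>+\<omega>. f \<omega> \<partial>model m) = (\<integral>\<^sup>+s. (\<integral>\<^sup>+\<omega>. f ((fst \<omega>)(i := s), snd \<omega>) \<partial>model m) \<partial>U01)"
proof -
  let ?MX = "PiM {1..m} (\<lambda>_. U01)" and ?MU = "PiM (pairs m) (\<lambda>_. U01)"
  interpret PU: prob_space ?MU by (intro prob_space_PiM prob_space_U01)
  have f'[measurable]: "f \<in> borel_measurable (?MX \<Otimes>\<^sub>M ?MU)" using f by (simp add: model_def)
  define H where "H X = (\<integral>\<^sup>+U. f (X, U) \<partial>?MU)" for X
  have H: "H \<in> borel_measurable ?MX" unfolding H_def by measurable
  have "(\<integral>\<^sup>+\<omega>. f \<omega> \<partial>model m) = (\<integral>\<^sup>+X. H X \<partial>?MX)"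
    unfolding H_def model_def by (rule PU.nn_integral_fst[OF f', symmetric])
  also have "\<dots> = (\<integral>\<^sup>+s. (\<integral>\<^sup>+X. H (X(i := s)) \<partial>?MX) \<partial>U01)"
    by (rule nn_integral_PiM_pin[OF prob_space_U01 _ i H]) simp
  also have "\<dots> = (\<integral>\<^sup>+s. (\<integral>\<^sup>+\<omega>. f ((fst \<omega>)(i := s), snd \<omega>) \<partial>model m) \<partial>U01)"
  proof (rule nn_integral_cong)
    fix s assume "s \<in> space U01"
    then have "(\<lambda>\<omega>. f ((fst \<omega>)(i := s), snd \<omega>)) \<in> borel_measurable (?MX \<Otimes>\<^sub>M ?MU)"
      using measurable_compose[OF measurable_model_pin[OF i] f] by (simp add: space_U01 model_def)
    from PU.nn_integral_fst[OF this]
    show "(\<integral>\<^sup>+X. H (X(i := s)) \<partial>?MX) = (\<integral>\<^sup>+\<omega>. f ((fst \<omega>)(i := s), snd \<omega>) \<partial>model m)"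
      unfolding H_def model_def by simp
  qed
  finally show ?thesis .
qed

lemma emeasure_model_pin:
  assumes P: "{\<omega> \<in> space (model m). P \<omega>} \<in> sets (model m)" and i: "i \<in> {1..m}"
  shows "emeasure (model m) {\<omega> \<in> space (model m). P \<omega>}
    = (\<integral>\<^sup>+s. emeasure (model m) {\<omega> \<in> space (model m). P ((fst \<omega>)(i := s), snd \<omega>)} \<partial>U01)"
proof -
  have Pm[measurable]: "Measurable.pred (model m) P"
    using P by (simp add: pred_def)
  have "emeasure (model m) {\<omega> \<in> space (model m). P \<omega>} = (\<integral>\<^sup>+\<omega>. (if P \<omega> then 1 else 0) \<partial>model m)"
    by (rule emeasure_Collect_eq_nn_integral[OF P])
  also have "\<dots> = (\<integral>\<^sup>+s. (\<integral>\<^sup>+\<omega>. (if P ((fst \<omega>)(i := s), snd \<omega>) then 1 else 0) \<partial>model m) \<partial>U01)"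
    by (rule nn_integral_model_pin[OF _ i]) measurable
  also have "\<dots> = (\<integral>\<^sup>+s. emeasure (model m) {\<omega> \<in> space (model m). P ((fst \<omega>)(i := s), snd \<omega>)} \<partial>U01)"
  proof (rule nn_integral_cong)
    fix s assume "s \<in> space U01"
    then have "Measurable.pred (model m) (\<lambda>\<omega>. P ((fst \<omega>)(i := s), snd \<omega>))"
      using measurable_compose[OF measurable_model_pin[OF i] Pm] by (simp add: space_U01)
    then show "(\<integral>\<^sup>+\<omega>. (if P ((fst \<omega>)(i := s), snd \<omega>) then 1 else 0) \<partial>model m)
        = emeasure (model m) {\<omega> \<in> space (model m). P ((fst \<omega>)(i := s), snd \<omega>)}"
      by (rule emeasure_Collect_eq_nn_integral[symmetric, OF predE])
  qed
  finally show ?thesis .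
qed

lemma nn_integral_model_factor_edge:
  assumes a: "a \<in> {2..m}"
    and f: "case_prod f \<in> borel_measurable (U01 \<Otimes>\<^sub>M U01)"
    and G: "G \<in> borel_measurable (model m)"
    and G_indep: "\<And>X U s. G (X(a := s), U) = G (X, U)" "\<And>X U t. G (X, U((1, a) := t)) = G (X, U)"
  shows "(\<integral>\<^sup>+\<omega>. f (fst \<omega> a) (snd \<omega> (1, a)) * G \<omega> \<partial>model m)
    = (\<integral>\<^sup>+z. f (fst z) (snd z) \<partial>(U01 \<Otimes>\<^sub>M U01)) * (\<integral>\<^sup>+\<omega>. G \<omega> \<partial>model m)"
  using a G unfolding model_def
  by (intro nn_integral_pair_PiM_factor_coordinates[OF prob_space_U01 prob_space_U01 _ _ finite_pairs]
      f G_indep) (auto simp: pairs_def)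

lemma cond_prob_bounds: "0 \<le> cond_prob W n k u y" "cond_prob W n k u y \<le> 1"
  and c_n_bounds: "0 \<le> c_n W n y" "c_n W n y \<le> 1"
  unfolding cond_prob_def c_n_def using prob_space.prob_le_1[OF prob_space_model] by auto

lemma abs_H_n_le: "\<bar>H_n W n y u\<bar> \<le> real n"
proof -
  have "\<bar>cond_prob W n 2 u y - c_n W n y\<bar> \<le> 1"
    using cond_prob_bounds[of W n 2 u y] c_n_bounds[of W n y] by (simp add: abs_le_iff)
  then show ?thesis
    unfolding H_n_def by (simp add: abs_mult mult_left_le)
qed

lemma abs_H_star_le: "\<bar>H_star W n y u\<bar> \<le> 1"
  using cond_prob_bounds[of W n 1 u y] c_n_bounds[of W n y] by (simp add: H_star_def abs_le_iff)

text \<open>Once the positions of vertex 1 (and of vertex 2) are pinned, the threshold of the edge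
  \<open>{1, j}\<close> depends on \<open>X\<^sub>j\<close> alone; \<open>w j\<close> is that threshold as a function of \<open>X\<^sub>j\<close>.\<close>
definition nbr_count :: "(nat \<Rightarrow> real \<Rightarrow> real) \<Rightarrow> nat set \<Rightarrow> (nat \<Rightarrow> real) \<times> (nat \<times> nat \<Rightarrow> real) \<Rightarrow> nat"
  where "nbr_count w J \<omega> = card {j \<in> J. snd \<omega> (1, j) < w j (fst \<omega> j)}"

lemma nbr_count_insert:
  assumes "a \<notin> J" "finite J"
  shows "nbr_count w (insert a J) \<omega>
    = (if snd \<omega> (1, a) < w a (fst \<omega> a) then Suc (nbr_count w J \<omega>) else nbr_count w J \<omega>)"
proof -
  have "{j \<in> insert a J. snd \<omega> (1, j) < w j (fst \<omega> j)} = (if snd \<omega> (1, a) < w a (fst \<omega> a)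
      then insert a {j \<in> J. snd \<omega> (1, j) < w j (fst \<omega> j)} else {j \<in> J. snd \<omega> (1, j) < w j (fst \<omega> j)})"
    by auto
  then show ?thesis
    using assms by (simp add: nbr_count_def)
qed

lemma nbr_count_fun_upd:
  assumes "a \<notin> J"
  shows "nbr_count w J (X(a := s), U) = nbr_count w J (X, U)"
    and "nbr_count w J (X, U((1, a) := t)) = nbr_count w J (X, U)"
  unfolding nbr_count_def using assms by (intro arg_cong[where f=card] Collect_cong; auto)+

lemma measurable_card_edges_from_1:
  assumes J: "J \<subseteq> {2..m}" and A: "\<And>j. j \<in> J \<Longrightarrow> A j \<in> borel_measurable (model m)"
  shows "(\<lambda>\<omega>. real (card {j \<in> J. snd \<omega> (1, j) < A j \<omega>})) \<in> borel_measurable (model m)"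
proof -
  have "finite J" using J finite_subset by blast
  then have "(\<lambda>\<omega>. real (card {j \<in> J. snd \<omega> (1, j) < A j \<omega>}))
      = (\<lambda>\<omega>. \<Sum>j\<in>J. if snd \<omega> (1, j) < A j \<omega> then 1 else 0)"
    by (simp add: sum.If_cases Int_def)
  also have "\<dots> \<in> borel_measurable (model m)"
  proof (rule borel_measurable_sum)
    fix j assume "j \<in> J"
    then have "(1, j) \<in> pairs m" and [measurable]: "A j \<in> borel_measurable (model m)"
      using J A by (auto simp: pairs_def)
    then have [measurable]: "(\<lambda>\<omega>. snd \<omega> (1, j)) \<in> borel_measurable (model m)"
      using measurable_compose[OF measurable_model_U measurable_ident_U01] by simp
    show "(\<lambda>\<omega>. if snd \<omega> (1, j) < A j \<omega> then 1 else 0 :: real) \<in> borel_measurable (model m)"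
      by measurable
  qed
  finally show ?thesis .
qed

lemma pred_nbr_count:
  assumes "J \<subseteq> {2..m}" and "\<And>j. j \<in> J \<Longrightarrow> w j \<in> borel_measurable U01"
  shows "Measurable.pred (model m) (\<lambda>\<omega>. nbr_count w J \<omega> \<le> k)"
    and "Measurable.pred (model m) (\<lambda>\<omega>. nbr_count w J \<omega> < k)"
proof -
  have [measurable]: "(\<lambda>\<omega>. real (nbr_count w J \<omega>)) \<in> borel_measurable (model m)"
    unfolding nbr_count_def using assms
    by (intro measurable_card_edges_from_1 measurable_compose[OF measurable_model_X]) auto
  have "Measurable.pred (model m) (\<lambda>\<omega>. real (nbr_count w J \<omega>) \<le> real k)"
      "Measurable.pred (model m) (\<lambda>\<omega>. real (nbr_count w J \<omega>) < real k)"
    by measurable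
  then show "Measurable.pred (model m) (\<lambda>\<omega>. nbr_count w J \<omega> \<le> k)"
      "Measurable.pred (model m) (\<lambda>\<omega>. nbr_count w J \<omega> < k)"
    by simp_all
qed

lemma nn_integral_U01_pair_below:
  assumes w[measurable]: "w \<in> borel_measurable U01"
    and w01: "\<And>s. s \<in> {0..1} \<Longrightarrow> 0 \<le> w s \<and> w s \<le> 1"
    and q: "(\<integral>\<^sup>+s. ennreal (w s) \<partial>U01) = ennreal q" "0 \<le> q"
  shows "(\<integral>\<^sup>+z. (if snd z < w (fst z) then 1 else 0) \<partial>(U01 \<Otimes>\<^sub>M U01)) = ennreal q"
    and "(\<integral>\<^sup>+z. (if \<not> snd z < w (fst z) then 1 else 0) \<partial>(U01 \<Otimes>\<^sub>M U01)) = ennreal (1 - q)"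
proof -
  interpret U: prob_space U01 by (rule prob_space_U01)
  have "(\<integral>\<^sup>+z. (if snd z < w (fst z) then 1 else 0) \<partial>(U01 \<Otimes>\<^sub>M U01)) = (\<integral>\<^sup>+s. ennreal (w s) \<partial>U01)"
    by (subst U.nn_integral_fst[symmetric])
       (simp_all add: nn_integral_U01_below w01 space_U01 cong: nn_integral_cong_simp)
  then show first: "(\<integral>\<^sup>+z. (if snd z < w (fst z) then 1 else 0) \<partial>(U01 \<Otimes>\<^sub>M U01)) = ennreal q"
    using q by simp
  interpret UU: prob_space "U01 \<Otimes>\<^sub>M U01" by (intro prob_space_pair U.prob_space_axioms)
  have sum1: "(\<lambda>z. (if \<not> snd z < w (fst z) then 1 else 0) + (if snd z < w (fst z) then 1 else 0))
      = (\<lambda>_. 1 :: ennreal)"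
    by auto
  have "(\<integral>\<^sup>+z. (if \<not> snd z < w (fst z) then 1 else 0) \<partial>(U01 \<Otimes>\<^sub>M U01)) + ennreal q = 1"
    unfolding first[symmetric] by (subst nn_integral_add[symmetric]) (simp_all add: sum1 UU.emeasure_space_1)
  then show "(\<integral>\<^sup>+z. (if \<not> snd z < w (fst z) then 1 else 0) \<partial>(U01 \<Otimes>\<^sub>M U01)) = ennreal (1 - q)"
    using q(2) by (metis ennreal_1 ennreal_add_diff_cancel_right ennreal_minus ennreal_neq_top)
qed

lemma emeasure_nbr_count_insert:
  assumes aJ: "a \<notin> J" "insert a J \<subseteq> {2..m}"
    and w[measurable]: "\<And>j. j \<in> insert a J \<Longrightarrow> w j \<in> borel_measurable U01"
    and wa: "\<And>s. s \<in> {0..1} \<Longrightarrow> 0 \<le> w a s \<and> w a s \<le> 1"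
    and q: "(\<integral>\<^sup>+s. ennreal (w a s) \<partial>U01) = ennreal q" "0 \<le> q"
  shows "emeasure (model m) {\<omega> \<in> space (model m). nbr_count w (insert a J) \<omega> \<le> k}
    = ennreal q * emeasure (model m) {\<omega> \<in> space (model m). nbr_count w J \<omega> < k}
      + ennreal (1 - q) * emeasure (model m) {\<omega> \<in> space (model m). nbr_count w J \<omega> \<le> k}"
proof -
  have J: "J \<subseteq> {2..m}" "finite J" and a: "a \<in> {2..m}"
    using aJ finite_subset[of J "{2..m}"] by auto
  define f where "f b s t = (if (t < w a s) = b then 1 else 0 :: ennreal)" for b s t
  define G where "G P \<omega> = (if P (nbr_count w J \<omega>) then 1 else 0 :: ennreal)" for P \<omega>
  note [measurable] = pred_nbr_count[OF J(1)] pred_nbr_count[OF aJ(2)]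
  have G_meas[measurable]: "G (\<lambda>i. i < k) \<in> borel_measurable (model m)"
      "G (\<lambda>i. i \<le> k) \<in> borel_measurable (model m)"
    unfolding G_def[abs_def] by measurable
  have f_meas[measurable]: "case_prod (f b) \<in> borel_measurable (U01 \<Otimes>\<^sub>M U01)" for b
    unfolding f_def by measurable
  have coordinates: "(\<lambda>\<omega>. fst \<omega> a) \<in> measurable (model m) U01" "(\<lambda>\<omega>. snd \<omega> (1, a)) \<in> measurable (model m) U01"
    using a by (auto simp: pairs_def intro!: measurable_model_X measurable_model_U)
  have [measurable]: "(\<lambda>\<omega>. f b (fst \<omega> a) (snd \<omega> (1, a))) \<in> borel_measurable (model m)" for b
    using measurable_compose[OF measurable_Pair[OF coordinates] f_meas] by simp
  have factor: "(\<integral>\<^sup>+\<omega>. f b (fst \<omega> a) (snd \<omega> (1, a)) * G P \<omega> \<partial>model m)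
      = (\<integral>\<^sup>+z. f b (fst z) (snd z) \<partial>(U01 \<Otimes>\<^sub>M U01)) * (\<integral>\<^sup>+\<omega>. G P \<omega> \<partial>model m)"
    if "G P \<in> borel_measurable (model m)" for b P
    by (intro nn_integral_model_factor_edge[OF a f_meas that]) (simp_all only: G_def nbr_count_fun_upd[OF aJ(1)])
  have "emeasure (model m) {\<omega> \<in> space (model m). nbr_count w (insert a J) \<omega> \<le> k}
      = (\<integral>\<^sup>+\<omega>. f True (fst \<omega> a) (snd \<omega> (1, a)) * G (\<lambda>i. i < k) \<omega>
          + f False (fst \<omega> a) (snd \<omega> (1, a)) * G (\<lambda>i. i \<le> k) \<omega> \<partial>model m)"
  proof -
    have split: "(if nbr_count w (insert a J) \<omega> \<le> k then 1 else 0)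
        = f True (fst \<omega> a) (snd \<omega> (1, a)) * G (\<lambda>i. i < k) \<omega>
          + f False (fst \<omega> a) (snd \<omega> (1, a)) * G (\<lambda>i. i \<le> k) \<omega>" for \<omega>
      by (simp add: nbr_count_insert[OF aJ(1) J(2)] f_def G_def Suc_le_eq)
    show ?thesis
      unfolding split[symmetric] by (rule emeasure_Collect_eq_nn_integral) measurable
  qed
  also have "\<dots> = (\<integral>\<^sup>+\<omega>. f True (fst \<omega> a) (snd \<omega> (1, a)) * G (\<lambda>i. i < k) \<omega> \<partial>model m)
      + (\<integral>\<^sup>+\<omega>. f False (fst \<omega> a) (snd \<omega> (1, a)) * G (\<lambda>i. i \<le> k) \<omega> \<partial>model m)"
    by (intro nn_integral_add) measurable
  also have "\<dots> = (\<integral>\<^sup>+z. f True (fst z) (snd z) \<partial>(U01 \<Otimes>\<^sub>M U01)) * (\<integral>\<^sup>+\<omega>. G (\<lambda>i. i < k) \<omega> \<partial>model m)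
      + (\<integral>\<^sup>+z. f False (fst z) (snd z) \<partial>(U01 \<Otimes>\<^sub>M U01)) * (\<integral>\<^sup>+\<omega>. G (\<lambda>i. i \<le> k) \<omega> \<partial>model m)"
    by (simp only: factor G_meas)
  also have "\<dots> = ennreal q * emeasure (model m) {\<omega> \<in> space (model m). nbr_count w J \<omega> < k}
      + ennreal (1 - q) * emeasure (model m) {\<omega> \<in> space (model m). nbr_count w J \<omega> \<le> k}"
    using nn_integral_U01_pair_below[OF w[of a] wa q]
      emeasure_Collect_eq_nn_integral[OF predE, OF pred_nbr_count(1)[OF J(1)], of w k]
      emeasure_Collect_eq_nn_integral[OF predE, OF pred_nbr_count(2)[OF J(1)], of w k]
    by (simp add: f_def G_def)
  finally show ?thesis .
qed

lemma emeasure_nbr_count_insert_binomial: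
  assumes aJ: "a \<notin> J" "insert a J \<subseteq> {2..m}"
    and w: "\<And>j. j \<in> insert a J \<Longrightarrow> w j \<in> borel_measurable U01"
    and wa: "\<And>s. s \<in> {0..1} \<Longrightarrow> 0 \<le> w a s \<and> w a s \<le> 1"
    and q: "(\<integral>\<^sup>+s. ennreal (w a s) \<partial>U01) = ennreal q" "0 \<le> q" "q \<le> 1"
    and p: "0 \<le> p" "p \<le> 1"
    and binomial: "\<And>k. emeasure (model m) {\<omega> \<in> space (model m). nbr_count w J \<omega> \<le> k}
      = ennreal (binom_cdf (card J) p k)"
  shows "emeasure (model m) {\<omega> \<in> space (model m). nbr_count w (insert a J) \<omega> \<le> k}
    = ennreal (binom_bernoulli_cdf (card J) p q k)"
proof -
  have less: "{\<omega> \<in> space (model m). nbr_count w J \<omega> < k}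
      = (if k = 0 then {} else {\<omega> \<in> space (model m). nbr_count w J \<omega> \<le> k - 1})"
    by auto
  have "emeasure (model m) {\<omega> \<in> space (model m). nbr_count w (insert a J) \<omega> \<le> k}
      = ennreal q * emeasure (model m) {\<omega> \<in> space (model m). nbr_count w J \<omega> < k}
        + ennreal (1 - q) * emeasure (model m) {\<omega> \<in> space (model m). nbr_count w J \<omega> \<le> k}"
    by (rule emeasure_nbr_count_insert[of a J m w q k, OF aJ w wa q(1,2)])
  also have "\<dots> = ennreal q * ennreal (if k = 0 then 0 else binom_cdf (card J) p (k - 1))
        + ennreal (1 - q) * ennreal (binom_cdf (card J) p k)"
    by (simp add: less binomial)
  also have "\<dots> = ennreal (binom_bernoulli_cdf (card J) p q k)"
    using binom_cdf_bounds[OF p] q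
    by (simp add: binom_bernoulli_cdf_def ennreal_mult[symmetric] ennreal_plus[symmetric] del: ennreal_plus)
  finally show ?thesis .
qed

lemma emeasure_nbr_count_binomial:
  assumes J: "J \<subseteq> {2..m}"
    and w: "\<And>j. j \<in> J \<Longrightarrow> w j \<in> borel_measurable U01"
    and w01: "\<And>j s. j \<in> J \<Longrightarrow> s \<in> {0..1} \<Longrightarrow> 0 \<le> w j s \<and> w j s \<le> 1"
    and p: "\<And>j. j \<in> J \<Longrightarrow> (\<integral>\<^sup>+s. ennreal (w j s) \<partial>U01) = ennreal p" "0 \<le> p" "p \<le> 1"
  shows "emeasure (model m) {\<omega> \<in> space (model m). nbr_count w J \<omega> \<le> k}
    = ennreal (binom_cdf (card J) p k)"
proof -
  have "finite J" using J finite_subset by blast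
  then show ?thesis
    using J w w01 p(1)
  proof (induction J arbitrary: k rule: finite_induct)
    case empty
    interpret prob_space "model m" by (rule prob_space_model)
    show ?case by (simp add: nbr_count_def binom_cdf_0_left emeasure_space_1)
  next
    case (insert a J)
    have "emeasure (model m) {\<omega> \<in> space (model m). nbr_count w (insert a J) \<omega> \<le> k}
        = ennreal (binom_bernoulli_cdf (card J) p p k)"
      using insert by (intro emeasure_nbr_count_insert_binomial) (simp_all add: p(2,3))
    then show ?case
      using insert(1,2) by (simp add: binom_cdf_Suc_left)
  qed
qed

section \<open>Conditional degree distributions\<close>

definition degree_cutoff :: "nat \<Rightarrow> real \<Rightarrow> nat" where
  "degree_cutoff n d = nat \<lfloor>real n * d\<rfloor>"

lemma degree_cutoff_bounds:
  assumes "0 < n" "0 \<le> d"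
  shows "real (degree_cutoff n d) / real n \<le> d" "d \<le> (real (degree_cutoff n d) + 1) / real n"
  using assms of_int_floor_le[of "real n * d"] real_of_int_floor_add_one_gt[of "real n * d"]
  by (simp_all add: degree_cutoff_def divide_le_eq le_divide_eq mult.commute)

lemma normdeg_le_iff:
  assumes "0 < n" "0 \<le> d"
  shows "normdeg W (Suc n) X U 1 \<le> d
    \<longleftrightarrow> card {j \<in> {2..Suc n}. U (1, j) < W (X 1) (X j)} \<le> degree_cutoff n d"
proof -
  have "{j \<in> {1..Suc n}. edge W X U 1 j} = {j \<in> {2..Suc n}. U (1, j) < W (X 1) (X j)}"
    by (auto simp: edge_def)
  moreover have "real c / real n \<le> d \<longleftrightarrow> c \<le> degree_cutoff n d" for c
    using assms by (simp add: degree_cutoff_def divide_le_eq mult.commute le_nat_iff le_floor_iff)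
  ultimately show ?thesis
    by (simp add: normdeg_def)
qed

lemma normdeg_event_eq_nbr_count_event:
  assumes "0 < n" "0 \<le> d"
    and X': "\<And>\<omega> j. j \<in> {2..Suc n} \<Longrightarrow> W (X' \<omega> 1) (X' \<omega> j) = w j (fst \<omega> j)"
  shows "{\<omega> \<in> space (model (n + 1)). normdeg W (n + 1) (X' \<omega>) (snd \<omega>) 1 \<le> d}
    = {\<omega> \<in> space (model (n + 1)). nbr_count w {2..Suc n} \<omega> \<le> degree_cutoff n d}"
proof -
  have "normdeg W (Suc n) (X' \<omega>) (snd \<omega>) 1 \<le> d \<longleftrightarrow> nbr_count w {2..Suc n} \<omega> \<le> degree_cutoff n d"
    for \<omega>
  proof -
    have "{j \<in> {2..Suc n}. snd \<omega> (1, j) < W (X' \<omega> 1) (X' \<omega> j)}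
        = {j \<in> {2..Suc n}. snd \<omega> (1, j) < w j (fst \<omega> j)}"
      using X'[of _ \<omega>] by (intro Collect_cong) auto
    then show ?thesis
      unfolding normdeg_le_iff[OF assms(1,2)] nbr_count_def by simp
  qed
  then show ?thesis
    by simp
qed

locale continuous_graphon =
  fixes W :: "real \<Rightarrow> real \<Rightarrow> real"
  assumes graphon: "graphon W"
    and continuous: "continuous_on sq01 (\<lambda>(x, y). W x y)"
begin

abbreviation D :: "real \<Rightarrow> real" where "D \<equiv> Dfun W"

lemma W_bounds: "x \<in> {0..1} \<Longrightarrow> y \<in> {0..1} \<Longrightarrow> 0 \<le> W x y \<and> W x y \<le> 1"
  using graphon by (simp add: graphon_def)

lemma measurable_W_comp:
  assumes f: "f \<in> measurable M U01" and g: "g \<in> measurable M U01"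
  shows "(\<lambda>\<omega>. W (f \<omega>) (g \<omega>)) \<in> borel_measurable M"
proof -
  have "(\<lambda>\<omega>. (f \<omega>, g \<omega>)) \<in> measurable M (restrict_space borel sq01)"
  proof (rule measurable_restrict_space2)
    show "(\<lambda>\<omega>. (f \<omega>, g \<omega>)) \<in> space M \<rightarrow> sq01"
      using measurable_space[OF f] measurable_space[OF g] by (auto simp: sq01_def space_U01)
    show "(\<lambda>\<omega>. (f \<omega>, g \<omega>)) \<in> borel_measurable M"
      using measurable_compose[OF f measurable_ident_U01] measurable_compose[OF g measurable_ident_U01]
      by (intro borel_measurable_Pair) simp_all
  qed
  from measurable_compose[OF this, of "\<lambda>(x, y). W x y" borel] graphon show ?thesis
    by (simp add: graphon_def)
qed

lemma measurable_W_U01: "x \<in> {0..1} \<Longrightarrow> W x \<in> borel_measurable U01"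
  using measurable_W_comp[OF measurable_const[of x U01 U01] measurable_ident_sets[OF refl]]
  by (simp add: space_U01)

lemma sets_normdeg_event:
  assumes "0 < n" "0 \<le> d" and X': "\<And>j. j \<in> {1..Suc n} \<Longrightarrow> (\<lambda>\<omega>. X' \<omega> j) \<in> measurable (model (Suc n)) U01"
  shows "{\<omega> \<in> space (model (n + 1)). normdeg W (n + 1) (X' \<omega>) (snd \<omega>) 1 \<le> d} \<in> sets (model (n + 1))"
proof -
  have "(\<lambda>\<omega>. real (card {j \<in> {2..Suc n}. snd \<omega> (1, j) < W (X' \<omega> 1) (X' \<omega> j)}))
      \<in> borel_measurable (model (Suc n))"
    using X' by (intro measurable_card_edges_from_1 measurable_W_comp) auto
  then have "Measurable.pred (model (Suc n))
      (\<lambda>\<omega>. real (card {j \<in> {2..Suc n}. snd \<omega> (1, j) < W (X' \<omega> 1) (X' \<omega> j)}) \<le> real (degree_cutoff n d))"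
    by measurable
  then have "Measurable.pred (model (Suc n)) (\<lambda>\<omega>. normdeg W (Suc n) (X' \<omega>) (snd \<omega>) 1 \<le> d)"
    unfolding normdeg_le_iff[OF assms(1,2)] of_nat_le_iff .
  then show ?thesis
    using predE by simp
qed

lemma continuous_on_W_left: "u \<in> {0..1} \<Longrightarrow> continuous_on {0..1} (\<lambda>s. W s u)"
  using continuous_on_sq01_slices(1)[OF continuous] by simp

lemma continuous_on_W_right: "x \<in> {0..1} \<Longrightarrow> continuous_on {0..1} (W x)"
  using continuous_on_sq01_slices(2)[OF continuous] by simp

lemma continuous_on_D: "continuous_on {0..1} D"
  unfolding Dfun_def[abs_def]
  using integral_continuous_on_param[of "{0..1}" 0 1 W] continuous by (simp add: sq01_def)

lemma nn_integral_W: "x \<in> {0..1} \<Longrightarrow> (\<integral>\<^sup>+s. ennreal (W x s) \<partial>U01) = ennreal (D x)"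
  unfolding Dfun_def by (rule nn_integral_U01_continuous[OF continuous_on_W_right]) (simp_all add: W_bounds)

lemma D_bounds:
  assumes "x \<in> {0..1}"
  shows "0 \<le> D x \<and> D x \<le> 1"
proof -
  have "W x integrable_on {0..1}"
    by (rule integrable_continuous_interval[OF continuous_on_W_right[OF assms]])
  then show ?thesis
    using integral_le[of "W x" "{0..1}" "\<lambda>_. 1"] integral_nonneg[of "W x" "{0..1}"] assms
      integrable_const_ivl[of "1::real" 0 1]
    by (simp add: Dfun_def W_bounds)
qed

lemma cond_prob_1_eq_binom_cdf:
  assumes n: "0 < n" and y: "y \<in> {0..1}" and x: "x \<in> {0..1}"
  shows "cond_prob W n 1 x y = binom_cdf n (D x) (degree_cutoff n (D y))"
proof -
  let ?k = "degree_cutoff n (D y)"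
  have "{\<omega> \<in> space (model (n + 1)). normdeg W (n + 1) ((fst \<omega>)(1 := x)) (snd \<omega>) 1 \<le> D y}
      = {\<omega> \<in> space (model (n + 1)). nbr_count (\<lambda>_. W x) {2..Suc n} \<omega> \<le> ?k}"
    by (rule normdeg_event_eq_nbr_count_event) (use n y D_bounds in auto)
  moreover have "emeasure (model (n + 1)) {\<omega> \<in> space (model (n + 1)). nbr_count (\<lambda>_. W x) {2..Suc n} \<omega> \<le> ?k}
      = ennreal (binom_cdf n (D x) ?k)"
    using emeasure_nbr_count_binomial[of "{2..Suc n}" "n + 1" "\<lambda>_. W x" "D x"]
    by (simp add: measurable_W_U01[OF x] W_bounds[OF x] nn_integral_W[OF x] D_bounds[OF x])
  ultimately show ?thesis
    using binom_cdf_bounds[of "D x"] D_bounds[OF x] by (simp add: cond_prob_def measure_def)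
qed

lemma continuous_on_binom_cdf_D: "continuous_on {0..1} (\<lambda>s. binom_cdf n (D s) k)"
  unfolding binom_cdf_def by (intro continuous_intros continuous_on_D)

lemma c_n_eq_integral:
  assumes n: "0 < n" and y: "y \<in> {0..1}"
  shows "c_n W n y = integral {0..1} (\<lambda>s. binom_cdf n (D s) (degree_cutoff n (D y)))"
proof -
  let ?k = "degree_cutoff n (D y)"
  interpret P: prob_space "model (Suc n)" by (rule prob_space_model)
  have "emeasure (model (n + 1)) {\<omega> \<in> space (model (n + 1)). normdeg W (n + 1) (fst \<omega>) (snd \<omega>) 1 \<le> D y}
      = (\<integral>\<^sup>+s. emeasure (model (n + 1))
          {\<omega> \<in> space (model (n + 1)). normdeg W (n + 1) ((fst \<omega>)(1 := s)) (snd \<omega>) 1 \<le> D y} \<partial>U01)"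
    using emeasure_model_pin[where P="\<lambda>\<omega>. normdeg W (n + 1) (fst \<omega>) (snd \<omega>) 1 \<le> D y" and i=1]
      sets_normdeg_event[of n "D y" "\<lambda>\<omega>. fst \<omega>"] n y D_bounds by simp
  also have "\<dots> = (\<integral>\<^sup>+s. ennreal (binom_cdf n (D s) ?k) \<partial>U01)"
    by (intro nn_integral_cong)
       (simp add: space_U01 P.emeasure_eq_measure
         cond_prob_1_eq_binom_cdf[OF n y, symmetric] cond_prob_def)
  also have "\<dots> = ennreal (integral {0..1} (\<lambda>s. binom_cdf n (D s) ?k))"
    by (rule nn_integral_U01_continuous[OF continuous_on_binom_cdf_D]) (simp add: binom_cdf_bounds D_bounds)
  finally show ?thesis
    using integral_nonneg[OF integrable_continuous_interval[OF continuous_on_binom_cdf_D]] binom_cdf_bounds D_bounds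
    by (simp add: c_n_def measure_def)
qed

lemma continuous_on_binom_bernoulli_cdf_D:
  assumes "u \<in> {0..1}"
  shows "continuous_on {0..1} (\<lambda>s. binom_bernoulli_cdf N (D s) (W s u) k)"
  unfolding binom_bernoulli_cdf_def binom_cdf_def
  by (cases "k = 0") (simp_all, (intro continuous_intros continuous_on_D continuous_on_W_left[OF assms])+)

lemma emeasure_normdeg_pinned_1_2:
  assumes n: "2 \<le> n" and y: "y \<in> {0..1}" and u: "u \<in> {0..1}" and s: "s \<in> {0..1}"
  shows "emeasure (model (n + 1))
      {\<omega> \<in> space (model (n + 1)). normdeg W (n + 1) (((fst \<omega>)(1 := s))(2 := u)) (snd \<omega>) 1 \<le> D y}
    = ennreal (binom_bernoulli_cdf (n - 1) (D s) (W s u) (degree_cutoff n (D y)))"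
proof -
  let ?k = "degree_cutoff n (D y)" and ?J = "{3..Suc n}"
  define w where "w j = (if j = 2 then (\<lambda>_. W s u) else W s)" for j :: nat
  have J: "{2..Suc n} = insert 2 ?J" "2 \<notin> ?J" "card ?J = n - 1"
    using n by auto
  have w_meas: "w j \<in> borel_measurable U01" for j
    by (simp add: w_def measurable_W_U01[OF s])
  have "{\<omega> \<in> space (model (n + 1)). normdeg W (n + 1) (((fst \<omega>)(1 := s))(2 := u)) (snd \<omega>) 1 \<le> D y}
      = {\<omega> \<in> space (model (n + 1)). nbr_count w (insert 2 ?J) \<omega> \<le> ?k}"
    unfolding J(1)[symmetric]
    by (rule normdeg_event_eq_nbr_count_event) (use n y D_bounds in \<open>auto simp: w_def\<close>)
  also have "emeasure (model (n + 1)) \<dots> = ennreal (binom_bernoulli_cdf (card ?J) (D s) (W s u) ?k)"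
  proof (rule emeasure_nbr_count_insert_binomial)
    show "emeasure (model (n + 1)) {\<omega> \<in> space (model (n + 1)). nbr_count w ?J \<omega> \<le> k}
        = ennreal (binom_cdf (card ?J) (D s) k)" for k
      by (rule emeasure_nbr_count_binomial)
         (use s in \<open>auto simp: w_def measurable_W_U01 W_bounds nn_integral_W D_bounds\<close>)
  qed (use n s u in \<open>auto simp: w_def W_bounds D_bounds w_meas measurable_W_U01
      prob_space.emeasure_space_1[OF prob_space_U01]\<close>)
  finally show ?thesis
    using J(3) by simp
qed

lemma cond_prob_2_eq_integral:
  assumes n: "2 \<le> n" and y: "y \<in> {0..1}" and u: "u \<in> {0..1}"
  shows "cond_prob W n 2 u y
    = integral {0..1} (\<lambda>s. binom_bernoulli_cdf (n - 1) (D s) (W s u) (degree_cutoff n (D y)))"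
proof -
  let ?k = "degree_cutoff n (D y)"
  interpret P: prob_space "model (Suc n)" by (rule prob_space_model)
  note cont = continuous_on_binom_bernoulli_cdf_D[OF u, of "n - 1" ?k]
  have nonneg: "0 \<le> binom_bernoulli_cdf (n - 1) (D s) (W s u) ?k" if "s \<in> {0..1}" for s
    using that u by (intro binom_bernoulli_cdf_nonneg) (simp_all add: D_bounds W_bounds)
  have X': "(\<lambda>\<omega>. ((fst \<omega>)(2 := u)) j) \<in> measurable (model (Suc n)) U01" if "j \<in> {1..Suc n}" for j
    using that u by (cases "j = 2") (simp_all add: space_U01)
  have "emeasure (model (n + 1))
      {\<omega> \<in> space (model (n + 1)). normdeg W (n + 1) ((fst \<omega>)(2 := u)) (snd \<omega>) 1 \<le> D y}
    = (\<integral>\<^sup>+s. emeasure (model (n + 1)) {\<omega> \<in> space (model (n + 1)).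
        normdeg W (n + 1) (((fst \<omega>)(1 := s))(2 := u)) (snd \<omega>) 1 \<le> D y} \<partial>U01)"
    using emeasure_model_pin[where P="\<lambda>\<omega>. normdeg W (n + 1) ((fst \<omega>)(2 := u)) (snd \<omega>) 1 \<le> D y" and i=1]
      sets_normdeg_event[of n "D y" "\<lambda>\<omega>. (fst \<omega>)(2 := u)"] X' n y D_bounds by simp
  also have "\<dots> = (\<integral>\<^sup>+s. ennreal (binom_bernoulli_cdf (n - 1) (D s) (W s u) ?k) \<partial>U01)"
    by (intro nn_integral_cong emeasure_normdeg_pinned_1_2[OF n y u]) (simp add: space_U01)
  also have "\<dots> = ennreal (integral {0..1} (\<lambda>s. binom_bernoulli_cdf (n - 1) (D s) (W s u) ?k))"
    by (rule nn_integral_U01_continuous[OF cont nonneg])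
  finally show ?thesis
    using integral_nonneg[OF integrable_continuous_interval[OF cont] nonneg]
    by (simp add: cond_prob_def measure_def)
qed

end

section \<open>Asymptotics for smooth graphons\<close>

text \<open>These are the only consequences of the Regularity Condition that the estimates use.\<close>
locale smooth_graphon = continuous_graphon +
  fixes D' :: "real \<Rightarrow> real" and c M1 M2 :: real
  assumes c_pos: "0 < c"
    and D_has_derivative: "\<And>x. x \<in> {0..1} \<Longrightarrow> (D has_real_derivative D' x) (at x within {0..1})"
    and D'_lower_bound: "\<And>x. x \<in> {0..1} \<Longrightarrow> c \<le> D' x"
    and D'_lipschitz: "M2-lipschitz_on {0..1} D'"
    and W_lipschitz: "\<And>u. u \<in> {0..1} \<Longrightarrow> M1-lipschitz_on {0..1} (\<lambda>x. W x u)"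
begin

lemma D'_pos: "x \<in> {0..1} \<Longrightarrow> 0 < D' x"
  using D'_lower_bound c_pos by (fastforce intro: less_le_trans)

lemma continuous_on_D': "continuous_on {0..1} D'"
  by (rule lipschitz_on_continuous_on[OF D'_lipschitz])

lemma D_lipschitz: "M1-lipschitz_on {0..1} D"
  unfolding Dfun_def[abs_def]
  using W_lipschitz lipschitz_on_nonneg[OF W_lipschitz[of 0]]
  by (intro lipschitz_on_integral_param integrable_continuous_interval continuous_on_W_right) auto

lemma D_increment_lower_bound:
  assumes "0 \<le> a" "a \<le> b" "b \<le> 1"
  shows "c * (b - a) \<le> D b - D a"
proof (cases "a = b")
  case False
  then have "a < b" using assms by simp
  have "\<exists>x\<in>{a<..<b}. (D b - c * b) - (D a - c * a) = (\<lambda>h. (D' x - c) * h) (b - a)"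
  proof (rule mvt_simple[OF \<open>a < b\<close>])
    fix x assume "a \<le> x" "x \<le> b"
    then have "(D has_real_derivative D' x) (at x within {a..b})"
      using assms by (intro DERIV_subset[OF D_has_derivative]) auto
    then have "((\<lambda>s. D s - c * s) has_real_derivative D' x - c) (at x within {a..b})"
      by (auto intro!: derivative_eq_intros)
    then show "((\<lambda>s. D s - c * s) has_derivative (\<lambda>h. (D' x - c) * h)) (at x within {a..b})"
      by (simp add: has_field_derivative_def)
  qed
  then obtain x where x: "x \<in> {a<..<b}" "(D b - c * b) - (D a - c * a) = (D' x - c) * (b - a)"
    by auto
  have "0 \<le> (D' x - c) * (b - a)"
    using D'_lower_bound[of x] x assms by auto
  then show ?thesis
    using x(2) by (simp add: algebra_simps)
qed simp

lemma deriv_D: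
  assumes "y \<in> {0<..<1}"
  shows "deriv D y = D' y"
proof -
  have "at y within {0..1} = at y"
    by (rule at_within_interior) (use assms in auto)
  then show ?thesis
    using D_has_derivative[of y] assms by (intro DERIV_imp_deriv) auto
qed

definition threshold_density :: "nat \<Rightarrow> nat \<Rightarrow> real \<Rightarrow> real" where
  "threshold_density n k s = real n * real ((n - 1) choose k) * D s ^ k * (1 - D s) ^ (n - 1 - k) * D' s"

lemma binom_cdf_D_has_derivative:
  "s \<in> {0..1} \<Longrightarrow>
    ((\<lambda>s. binom_cdf n (D s) k) has_real_derivative - threshold_density n k s) (at s within {0..1})"
  unfolding threshold_density_def
  using DERIV_chain'[OF D_has_derivative binom_cdf_has_derivative] by simp

lemma threshold_density_nonneg: "s \<in> {0..1} \<Longrightarrow> 0 \<le> threshold_density n k s"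
  using D_bounds[of s] D'_pos[of s] by (simp add: threshold_density_def)

lemma continuous_on_threshold_density: "continuous_on {0..1} (threshold_density n k)"
  unfolding threshold_density_def[abs_def] by (intro continuous_intros continuous_on_D continuous_on_D')

lemma binom_cdf_D_bounds: "s \<in> {0..1} \<Longrightarrow> 0 \<le> binom_cdf n (D s) k \<and> binom_cdf n (D s) k \<le> 1"
  using binom_cdf_bounds[of "D s"] D_bounds[of s] by simp

lemma binom_cdf_D_upper_tail:
  assumes "0 < n" "0 \<le> x" "x \<le> y" "y \<le> 1"
  shows "1 - binom_cdf n (D x) (degree_cutoff n (D y)) \<le> exp (-2 * real n * (c * (y - x))\<^sup>2)"
proof (rule binom_cdf_upper_tail)
  show "D x + c * (y - x) \<le> (real (degree_cutoff n (D y)) + 1) / real n"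
    using D_increment_lower_bound[of x y] degree_cutoff_bounds(2)[of n "D y"] D_bounds[of y] assms
    by auto
qed (use assms D_bounds[of x] c_pos in auto)

lemma binom_cdf_D_lower_tail:
  assumes "0 < n" "0 \<le> y" "y \<le> x" "x \<le> 1"
  shows "binom_cdf n (D x) (degree_cutoff n (D y)) \<le> exp (-2 * real n * (c * (x - y))\<^sup>2)"
proof (rule binom_cdf_lower_tail)
  show "real (degree_cutoff n (D y)) / real n \<le> D x - c * (x - y)"
    using D_increment_lower_bound[of y x] degree_cutoff_bounds(1)[of n "D y"] D_bounds[of y] assms
    by auto
qed (use assms D_bounds[of x] c_pos in auto)

lemma binom_cdf_D_limit:
  assumes y: "y \<in> {0..1}" and x: "x \<in> {0..1}" and "x \<noteq> y"
  shows "(\<lambda>n. binom_cdf n (D x) (degree_cutoff n (D y))) \<longlonglongrightarrow> (if x < y then 1 else 0)"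
proof -
  have \<epsilon>: "0 < c * \<bar>y - x\<bar>"
    using c_pos assms by simp
  have bounds: "\<forall>\<^sub>F n in sequentially. 0 \<le> binom_cdf n (D x) (degree_cutoff n (D y))
      \<and> binom_cdf n (D x) (degree_cutoff n (D y)) \<le> 1"
    using binom_cdf_D_bounds[OF x] by simp
  show ?thesis
  proof (cases "x < y")
    case True
    have "\<forall>\<^sub>F n in sequentially. 1 - exp (-2 * real n * (c * \<bar>y - x\<bar>)\<^sup>2)
        \<le> binom_cdf n (D x) (degree_cutoff n (D y))"
    proof (rule eventually_sequentiallyI[of 1])
      fix n :: nat assume "1 \<le> n"
      then show "1 - exp (-2 * real n * (c * \<bar>y - x\<bar>)\<^sup>2) \<le> binom_cdf n (D x) (degree_cutoff n (D y))"
        using binom_cdf_D_upper_tail[of n x y] True x y by simp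
    qed
    with bounds show ?thesis
      using True tendsto_diff[OF tendsto_const exp_neg_linear_tendsto_0[OF \<epsilon>], of 1]
      by (auto intro: tendsto_sandwich[OF _ _ _ tendsto_const] elim: eventually_mono)
  next
    case False
    have "\<forall>\<^sub>F n in sequentially. binom_cdf n (D x) (degree_cutoff n (D y))
        \<le> exp (-2 * real n * (c * \<bar>y - x\<bar>)\<^sup>2)"
    proof (rule eventually_sequentiallyI[of 1])
      fix n :: nat assume "1 \<le> n"
      then show "binom_cdf n (D x) (degree_cutoff n (D y)) \<le> exp (-2 * real n * (c * \<bar>y - x\<bar>)\<^sup>2)"
        using binom_cdf_D_lower_tail[of n y x] False x y \<open>x \<noteq> y\<close> by (simp add: power2_abs)
    qed
    with bounds show ?thesis
      using False exp_neg_linear_tendsto_0[OF \<epsilon>]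
      by (auto intro: tendsto_sandwich[OF _ _ tendsto_const] elim: eventually_mono)
  qed
qed

lemma integral_binom_cdf_D_limit:
  assumes y: "y \<in> {0..1}"
  shows "(\<lambda>n. integral {0..1} (\<lambda>s. binom_cdf n (D s) (degree_cutoff n (D y)))) \<longlonglongrightarrow> y"
proof -
  \<comment> \<open>\<open>binom_cdf_D_limit\<close> excludes \<open>s = y\<close>; a single point is negligible for the integrals\<close>
  define f where "f n s = (if s = y then 0 else binom_cdf n (D s) (degree_cutoff n (D y)))" for n s
  define g :: "real \<Rightarrow> real" where "g s = (if s < y then 1 else 0)" for s
  have integral_f: "integral {0..1} (\<lambda>s. binom_cdf n (D s) (degree_cutoff n (D y))) = integral {0..1} (f n)"
    for n
    by (rule integral_spike[where S="{y}"]) (auto simp: f_def)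
  have integrable_f: "f n integrable_on {0..1}" for n
    by (rule integrable_spike[OF integrable_continuous_interval[OF continuous_on_binom_cdf_D], where S="{y}"])
       (auto simp: f_def)
  have bound: "norm (f n s) \<le> 1" if "s \<in> {0..1}" for n s
    using binom_cdf_D_bounds[OF that] by (simp add: f_def)
  have pointwise: "(\<lambda>n. f n s) \<longlonglongrightarrow> g s" if "s \<in> {0..1}" for s
    using binom_cdf_D_limit[OF y that] by (cases "s = y") (simp_all add: f_def g_def)
  note limit = dominated_convergence[OF integrable_f integrable_const_ivl[of "1::real" 0 1] bound pointwise]
  have "integral {0..1} g = integral {0..y} g + integral {y..1} g"
    using Henstock_Kurzweil_Integration.integral_combine[OF _ _ limit(1), of y] y by simp
  also have "integral {0..y} g = integral {0..y} (\<lambda>_. 1 :: real)"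
    by (rule integral_spike[where S="{y}"]) (auto simp: g_def)
  also have "integral {y..1} g = integral {y..1} (\<lambda>_. 0 :: real)"
    by (rule integral_cong) (simp add: g_def)
  finally have "integral {0..1} g = y"
    using y by simp
  then show ?thesis
    using limit(2) by (simp add: integral_f)
qed

lemma H_star_limit:
  assumes y: "y \<in> {0<..<1}" and u: "u \<in> {0..1}" and "u \<noteq> y"
  shows "(\<lambda>n. H_star W n y u) \<longlonglongrightarrow> (if u \<le> y then 1 else 0) - y"
proof -
  have y01: "y \<in> {0..1}" using y by auto
  have "\<forall>\<^sub>F n in sequentially. binom_cdf n (D u) (degree_cutoff n (D y))
      - integral {0..1} (\<lambda>s. binom_cdf n (D s) (degree_cutoff n (D y))) = H_star W n y u"
  proof (rule eventually_sequentiallyI[of 1])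
    fix n :: nat assume "1 \<le> n"
    then have n: "0 < n" by simp
    show "binom_cdf n (D u) (degree_cutoff n (D y))
        - integral {0..1} (\<lambda>s. binom_cdf n (D s) (degree_cutoff n (D y))) = H_star W n y u"
      unfolding H_star_def cond_prob_1_eq_binom_cdf[OF n y01 u] c_n_eq_integral[OF n y01] ..
  qed
  moreover have "(\<lambda>n. binom_cdf n (D u) (degree_cutoff n (D y))
      - integral {0..1} (\<lambda>s. binom_cdf n (D s) (degree_cutoff n (D y)))) \<longlonglongrightarrow> (if u < y then 1 else 0) - y"
    by (intro tendsto_diff binom_cdf_D_limit integral_binom_cdf_D_limit) (use y01 u assms(3) in auto)
  ultimately show ?thesis
    using assms(3) by (simp add: Lim_transform_eventually less_le)
qed

definition H_lim :: "real \<Rightarrow> real \<Rightarrow> real" where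
  "H_lim u s = (D s - W s u) / D' s"

lemma abs_H_lim_le:
  assumes "u \<in> {0..1}" "s \<in> {0..1}"
  shows "\<bar>H_lim u s\<bar> \<le> 1 / c"
proof -
  have D's: "c \<le> D' s" "0 < D' s"
    using D'_lower_bound D'_pos assms by auto
  have "\<bar>H_lim u s\<bar> = \<bar>D s - W s u\<bar> / D' s"
    using D's by (simp add: H_lim_def)
  also have "\<dots> \<le> 1 / D' s"
    using D_bounds[of s] W_bounds[of s u] assms D's by (intro divide_right_mono) auto
  also have "\<dots> \<le> 1 / c"
    using D's c_pos by (intro divide_left_mono) auto
  finally show ?thesis .
qed

lemma continuous_on_H_lim:
  assumes "u \<in> {0..1}"
  shows "continuous_on {0..1} (H_lim u)"
proof -
  have "D' s \<noteq> 0" if "s \<in> {0..1}" for s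
    using D'_pos[OF that] by simp
  then show ?thesis
    unfolding H_lim_def[abs_def]
    by (intro continuous_intros continuous_on_D continuous_on_W_left[OF assms] continuous_on_D') auto
qed

lemma H_lim_lipschitz:
  assumes u: "u \<in> {0..1}" and s: "s \<in> {0..1}" and y: "y \<in> {0..1}"
  shows "\<bar>H_lim u s - H_lim u y\<bar> \<le> (2 * M1 / c + M2 / c\<^sup>2) * \<bar>s - y\<bar>"
proof -
  define N where "N x = D x - W x u" for x
  have D's: "c \<le> D' s" "0 < D' s" and D'y: "c \<le> D' y" "0 < D' y"
    using D'_lower_bound D'_pos s y by auto
  have Ny: "\<bar>N y\<bar> \<le> 1"
    using D_bounds[OF y] W_bounds[OF y u] by (auto simp: N_def)
  have N_lip: "\<bar>N s - N y\<bar> \<le> 2 * M1 * \<bar>s - y\<bar>"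
    using lipschitz_onD[OF D_lipschitz s y] lipschitz_onD[OF W_lipschitz[OF u] s y]
    by (simp add: N_def dist_real_def)
  have D'_lip: "\<bar>D' y - D' s\<bar> \<le> M2 * \<bar>s - y\<bar>"
    using lipschitz_onD[OF D'_lipschitz y s] by (simp add: dist_real_def abs_minus_commute)
  have "H_lim u s - H_lim u y = (N s - N y) / D' s + N y * (D' y - D' s) / (D' s * D' y)"
    using D's D'y by (simp add: H_lim_def N_def field_simps)
  also have "\<bar>\<dots>\<bar> \<le> \<bar>N s - N y\<bar> / D' s + \<bar>N y\<bar> * \<bar>D' y - D' s\<bar> / (D' s * D' y)"
    using D's D'y by (simp add: abs_mult abs_triangle_ineq[THEN order.trans])
  also have "\<dots> \<le> \<bar>N s - N y\<bar> / c + \<bar>N y\<bar> * \<bar>D' y - D' s\<bar> / (c * c)"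
    using D's D'y c_pos by (intro add_mono divide_left_mono mult_mono) auto
  also have "\<dots> \<le> 2 * M1 * \<bar>s - y\<bar> / c + 1 * (M2 * \<bar>s - y\<bar>) / (c * c)"
    using N_lip Ny D'_lip c_pos by (intro add_mono divide_right_mono mult_mono) auto
  finally show ?thesis
    by (simp add: power2_eq_square algebra_simps)
qed

lemma H_n_eq_integral:
  assumes n: "2 \<le> n" and y: "y \<in> {0..1}" and u: "u \<in> {0..1}"
  shows "H_n W n y u
    = integral {0..1} (\<lambda>s. H_lim u s * threshold_density n (degree_cutoff n (D y)) s)"
proof -
  let ?k = "degree_cutoff n (D y)"
  have n0: "0 < n" using n by simp
  have difference: "real n * (binom_bernoulli_cdf (n - 1) (D s) (W s u) ?k - binom_cdf n (D s) ?k)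
      = H_lim u s * threshold_density n ?k s" if "s \<in> {0..1}" for s
  proof -
    have "H_lim u s * threshold_density n ?k s
        = real n * ((D s - W s u) * (real ((n - 1) choose ?k) * D s ^ ?k * (1 - D s) ^ (n - 1 - ?k)))"
      unfolding H_lim_def threshold_density_def using D'_pos[OF that] by (simp add: field_simps)
    then show ?thesis
      using binom_bernoulli_cdf_minus_binom_cdf[of "n - 1" "D s" "W s u" ?k] n by simp
  qed
  have "H_n W n y u = real n * integral {0..1} (\<lambda>s. binom_bernoulli_cdf (n - 1) (D s) (W s u) ?k
      - binom_cdf n (D s) ?k)"
    unfolding H_n_def cond_prob_2_eq_integral[OF n y u] c_n_eq_integral[OF n0 y]
    by (simp add: integral_diff integrable_continuous_interval continuous_on_binom_cdf_D
        continuous_on_binom_bernoulli_cdf_D[OF u])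
  also have "\<dots> = integral {0..1} (\<lambda>s. real n * (binom_bernoulli_cdf (n - 1) (D s) (W s u) ?k
      - binom_cdf n (D s) ?k))"
    by (rule integral_mult_right[symmetric])
  also have "\<dots> = integral {0..1} (\<lambda>s. H_lim u s * threshold_density n ?k s)"
    by (rule integral_cong) (rule difference)
  finally show ?thesis .
qed

lemma H_n_close:
  assumes n: "2 \<le> n" and u: "u \<in> {0..1}"
    and y: "real n powr (-1/4) \<le> y" "y + real n powr (-1/4) \<le> 1"
  shows "\<bar>H_n W n y u - H_lim u y\<bar> \<le> (2 * M1 / c + M2 / c\<^sup>2 + 3 / c ^ 3) * real n powr (-1/4)"
proof -
  define \<delta> where "\<delta> = real n powr (-1/4)"
  define \<Phi> where "\<Phi> s = binom_cdf n (D s) (degree_cutoff n (D y))" for s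
  have \<delta>: "0 < \<delta>" using n by (simp add: \<delta>_def)
  have y01: "y \<in> {0..1}"
    using y \<delta>[unfolded \<delta>_def] unfolding atLeastAtMost_iff by linarith
  have M1: "0 \<le> M1" using lipschitz_on_nonneg[OF W_lipschitz[OF u]] .
  have M2: "0 \<le> M2" using lipschitz_on_nonneg[OF D'_lipschitz] .
  have tail: "exp (-2 * real n * (c * \<delta>)\<^sup>2) \<le> \<delta> / (2 * c\<^sup>2)"
    unfolding \<delta>_def using exp_neg_quarter_power_le[of c "real n"] c_pos n by simp
  have "\<bar>H_n W n y u - H_lim u y\<bar> \<le> (2 * M1 / c + M2 / c\<^sup>2) * \<delta> + 3 * (1 / c) * ((1 - \<Phi> (y - \<delta>)) + \<Phi> (y + \<delta>))"
    unfolding H_n_eq_integral[OF n y01 u]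
  proof (rule integral_against_concentrated_density[where \<Phi>=\<Phi> and a="y - \<delta>" and b="y + \<delta>"])
    show "\<bar>H_lim u s - H_lim u y\<bar> \<le> (2 * M1 / c + M2 / c\<^sup>2) * \<bar>s - y\<bar>" if "s \<in> {0..1}" for s
      by (rule H_lim_lipschitz[OF u that y01])
    show "(\<Phi> has_real_derivative - threshold_density n (degree_cutoff n (D y)) s) (at s within {0..1})"
      if "s \<in> {0..1}" for s
      unfolding \<Phi>_def[abs_def] by (rule binom_cdf_D_has_derivative[OF that])
  qed (use y \<delta> M1 M2 c_pos u in \<open>auto simp: \<delta>_def \<Phi>_def binom_cdf_D_bounds
      continuous_on_threshold_density threshold_density_nonneg continuous_on_H_lim abs_H_lim_le\<close>)
  also have "\<dots> \<le> (2 * M1 / c + M2 / c\<^sup>2) * \<delta> + 3 * (1 / c) * (\<delta> / (2 * c\<^sup>2) + \<delta> / (2 * c\<^sup>2))"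
  proof -
    have "1 - \<Phi> (y - \<delta>) \<le> \<delta> / (2 * c\<^sup>2)"
      using binom_cdf_D_upper_tail[of n "y - \<delta>" y] tail y y01 n by (simp add: \<Phi>_def \<delta>_def)
    moreover have "\<Phi> (y + \<delta>) \<le> \<delta> / (2 * c\<^sup>2)"
      using binom_cdf_D_lower_tail[of n y "y + \<delta>"] tail y y01 n by (simp add: \<Phi>_def \<delta>_def)
    ultimately show ?thesis
      using c_pos by (intro add_left_mono mult_left_mono add_mono) auto
  qed
  also have "\<dots> = (2 * M1 / c + M2 / c\<^sup>2 + 3 / c ^ 3) * real n powr (-1/4)"
    using c_pos by (simp add: \<delta>_def field_simps power2_eq_square power3_eq_cube)
  finally show ?thesis .
qed

lemma H_n_expansion:
  assumes y: "y \<in> {0<..<1}"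
  shows "\<exists>C>0. \<forall>n\<ge>2. \<forall>u\<in>{0..1}. \<bar>H_n W n y u - H_lim u y\<bar> \<le> C * real n powr (-1/4)"
proof -
  define m where "m = min y (1 - y)"
  define C where "C = max (2 * M1 / c + M2 / c\<^sup>2 + 3 / c ^ 3) ((1 / m ^ 4 + 1 / c) / m)"
  have m: "0 < m" "m \<le> y" "m \<le> 1 - y" using y by (auto simp: m_def)
  have "0 < (1 / m ^ 4 + 1 / c) / m" using m c_pos by (intro divide_pos_pos add_pos_pos) auto
  then have C: "0 < C" by (simp add: C_def)
  have "\<bar>H_n W n y u - H_lim u y\<bar> \<le> C * real n powr (-1/4)" if n: "2 \<le> n" and u: "u \<in> {0..1}" for n u
  proof (cases "real n powr (-1/4) \<le> m")
    case True
    then have "\<bar>H_n W n y u - H_lim u y\<bar> \<le> (2 * M1 / c + M2 / c\<^sup>2 + 3 / c ^ 3) * real n powr (-1/4)"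
      using m by (intro H_n_close[OF n u]) auto
    also have "\<dots> \<le> C * real n powr (-1/4)"
      by (intro mult_right_mono) (simp_all add: C_def)
    finally show ?thesis .
  next
    case False
    \<comment> \<open>only finitely many \<open>n\<close> fall here, and for them the trivial bound \<open>\<bar>H\<^sub>n\<bar> \<le> n\<close> suffices\<close>
    have "m ^ 4 < (real n powr (-1/4)) ^ 4"
      using False m by (intro power_strict_mono) auto
    also have "\<dots> = 1 / real n"
      using n by (subst powr_power) (simp_all add: powr_minus_divide)
    finally have "real n < 1 / m ^ 4"
      using n m by (simp add: field_simps)
    then have "\<bar>H_n W n y u - H_lim u y\<bar> \<le> (1 / m ^ 4 + 1 / c) / m * m"
      using abs_H_n_le[of W n y u] abs_H_lim_le[OF u, of y] y m by (simp add: abs_le_iff)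
    also have "\<dots> \<le> C * real n powr (-1/4)"
      using False m C by (intro mult_mono) (auto simp: C_def)
    finally show ?thesis .
  qed
  with C show ?thesis
    by blast
qed

end

section \<open>Regular graphons\<close>

lemma regular_graphon_imp_smooth_graphon:
  assumes graphon: "graphon W" and regular: "regular_graphon W"
  obtains D' c M1 M2 where "smooth_graphon W D' c M1 M2"
proof -
  let ?W = "\<lambda>(x, y). W x y"
  have "C3_on sq01 ?W"
    using regular by (simp add: regular_graphon_def)
  then obtain F M1 M2 where F: "\<And>z. z \<in> sq01 \<Longrightarrow> (?W has_derivative blinfun_apply (F z)) (at z within sq01)"
      and M1: "\<And>z. z \<in> sq01 \<Longrightarrow> norm (F z) \<le> M1" and M2: "M2-lipschitz_on sq01 F"
    by (rule C3_on_sq01_lipschitz_derivative) blast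
  interpret continuous_graphon W
    using graphon has_derivative_continuous_on[OF F] by unfold_locales
  define D' where "D' x = integral {0..1} (\<lambda>t. blinfun_apply (F (x, t)) (1, 0))" for x
  have D_derivative: "(D has_real_derivative D' x) (at x within {0..1})" if "x \<in> {0..1}" for x
    using integral_has_derivative_first_arg[OF F lipschitz_on_continuous_on[OF M2] that]
    by (simp add: Dfun_def[abs_def] D'_def)
  have D'_lipschitz: "M2-lipschitz_on {0..1} D'"
    unfolding D'_def using lipschitz_on_nonneg[OF M2] lipschitz_on_partial_first[OF M2]
    by (intro lipschitz_on_integral_param integrable_continuous_interval continuous_on_sq01_slices(2)
        continuous_intros lipschitz_on_continuous_on[OF M2]) auto
  have "\<forall>x\<in>{0..1}. \<exists>d'. (D has_real_derivative d') (at x within {0..1}) \<and> d' > 0"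
    using regular by (simp add: regular_graphon_def)
  then have D'_pos: "0 < D' x" if "x \<in> {0..1}" for x
    using that D_derivative[OF that] vector_derivative_unique_within_closed_interval[of 0 1 x D]
    by (fastforce simp: has_real_derivative_iff_has_vector_derivative)
  obtain c where "0 < c" "\<And>x. x \<in> {0..1} \<Longrightarrow> c \<le> D' x"
    using continuous_on_pos_bounded_below[OF lipschitz_on_continuous_on[OF D'_lipschitz] D'_pos] by blast
  moreover have "M1-lipschitz_on {0..1} (\<lambda>x. W x u)" if "u \<in> {0..1}" for u
    using lipschitz_on_first_arg[OF F M1 that] by simp
  ultimately show ?thesis
    using D_derivative D'_lipschitz by (intro that) unfold_locales
qed

theorem proposition8p2:
  fixes W :: "real \<Rightarrow> real \<Rightarrow> real"
  assumes "graphon W" and "regular_graphon W"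
  shows "(\<forall>y\<in>{0<..<1}. \<exists>C>0. \<forall>n\<ge>2. \<forall>u\<in>{0..1}.
            \<bar>H_n W n y u - (Dfun W y - W y u) / deriv (Dfun W) y\<bar> \<le> C * real n powr (-1/4))
       \<and> (\<forall>y\<in>{0<..<1}. \<forall>u\<in>{0..1}. u \<noteq> y \<longrightarrow>
            (\<forall>n\<ge>2. \<bar>H_star W n y u\<bar> \<le> 1) \<and>
            (\<lambda>n. H_star W n y u) \<longlonglongrightarrow> (if u \<le> y then 1 else 0) - y)"
proof -
  obtain D' c M1 M2 where "smooth_graphon W D' c M1 M2"
    using regular_graphon_imp_smooth_graphon[OF assms] .
  then interpret smooth_graphon W D' c M1 M2 .
  have "\<exists>C>0. \<forall>n\<ge>2. \<forall>u\<in>{0..1}.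
      \<bar>H_n W n y u - (D y - W y u) / deriv D y\<bar> \<le> C * real n powr (-1/4)" if "y \<in> {0<..<1}" for y
    using H_n_expansion[OF that] by (simp add: H_lim_def deriv_D[OF that])
  then show ?thesis
    using abs_H_star_le H_star_limit by blast
qed

end
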